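(* Let $G$ be a graph on $[n+1]$ satisfying the standing assumptions below, let ${\bf a}=(a_1,\ldots,a_n,-\sum a_i)$ with $a_i\in\mathbb{Z}_{\ge0}$, and let ${\bf m}=(m_1,\ldots,m_n)$ be a tuple of positive integers such that $G({\bf m})$ appears as a leaf of the canonical compounded reduction tree of $\mathcal{F}_G({\bf a})$. Then the number of leaves of that tree equal to $G({\bf m})$ is \[ K_G(m_1-{\rm outd}_1,m_2-{\rm outd}_2,\ldots,m_n-{\rm outd}_n,0), \] where ${\rm outd}_i$ is the outdegree of vertex $i$ in $G$.
   Context: Standing assumptions: $G$ is a connected directed multigraph without loops on $[n+1]$, edges directed $i\to j$ with $i<j$, each vertex $1,\ldots,n$ has an outgoing edge. $G({\bf m})$ denotes the graph on $[n+1]$ with exactly $m_i$ copies of the edge $(i,n+1)$ for each $i$ and no other edges. $K_H({\bf v})$ is the number of $f\in\mathbb{Z}_{\ge0}^{E(H)}$ with outflow minus inflow at each vertex $k$ equal to $v_k$. Noncrossing trees: for ordered lists $L=(x_1,\ldots,x_\ell)$, $R=(y_1,\ldots,y_r)$, $\mathcal{T}_{L,R}$ is the set of trees on $L\sqcup R$ with all edges between $L$ and $R$ and no two edges $(x_p,y_q),(x_t,y_u)$ with $p<t$, $q>u$. Compounded reduction at vertex $i\in\{2,\ldots,n\}$ of a graph $H$ in which $i$ has incoming edges: with $\mathcal{I}_i(H)$, $\mathcal{O}_i(H)$ the multisets of edges $(\cdot,i)$, $(i,\cdot)$ in fixed orderings, put $L=\mathcal{I}_i(H)$ if $a_i=0$,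 $L=(\mathcal{I}_i(H),v_i)$ ($v_i$ a new symbol placed last) if $a_i>0$, $R=\mathcal{O}_i(H)$; for $T\in\mathcal{T}_{L,R}$, $H^{(i)}_T$ is obtained from $H$ by deleting $\mathcal{I}_i(H)\cup\mathcal{O}_i(H)$, adding an edge $(r,s)$ for each tree edge joining $(r,i)$ and $(i,s)$, an edge $(i,s)$ for each tree edge joining $v_i$ and $(i,s)$, and, if $a_i=0$, one edge $(i,n+1)$. The canonical compounded reduction tree of $\mathcal{F}_G({\bf a})$ is the rooted tree with root $G$ obtained by, for $i=n,n-1,\ldots,2$ in this order, giving every current leaf $H$ in which vertex $i$ has incoming edges the children $H^{(i)}_T$, $T\in\mathcal{T}_{L,R}$ (one child per tree $T$). *)

theory Defs
  imports Main "HOL-Library.Multiset" "HOL-Library.Product_Lexorder"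
begin

type_synonym edge = "nat \<times> nat"
type_synonym graph = "edge multiset"

definition standing :: "nat \<Rightarrow> graph \<Rightarrow> bool" where
  "standing n G \<longleftrightarrow>
     (\<forall>e \<in># G. 1 \<le> fst e \<and> fst e < snd e \<and> snd e \<le> n + 1) \<and>
     (\<forall>u \<in> {1..n+1}. \<forall>v \<in> {1..n+1}.
        (u, v) \<in> (set_mset G \<union> (set_mset G)\<inverse>)\<^sup>*) \<and>
     (\<forall>i \<in> {1..n}. \<exists>e \<in># G. fst e = i)"

definition outd :: "graph \<Rightarrow> nat \<Rightarrow> nat" where
  "outd G i = size (filter_mset (\<lambda>e. fst e = i) G)"

definition Gm :: "nat \<Rightarrow> (nat \<Rightarrow> nat) \<Rightarrow> graph" where
  "Gm n m = sum_mset (image_mset (\<lambda>i. replicate_mset (m i) (i, n + 1)) (mset_set {1..n}))"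

text \<open>K_H(v): integer flows, one nonnegative value per edge copy; the copies are
  enumerated by the sorted list of the multiset.\<close>
definition netflow :: "graph \<Rightarrow> (nat \<Rightarrow> nat) \<Rightarrow> nat \<Rightarrow> int" where
  "netflow H f k =
     (let es = sorted_list_of_multiset H in
       (\<Sum>j \<in> {j. j < length es \<and> fst (es ! j) = k}. int (f j))
     - (\<Sum>j \<in> {j. j < length es \<and> snd (es ! j) = k}. int (f j)))"

definition K :: "nat \<Rightarrow> graph \<Rightarrow> (nat \<Rightarrow> int) \<Rightarrow> nat" where
  "K n H v = card {f :: nat \<Rightarrow> nat. (\<forall>j \<ge> size H. f j = 0) \<and>
                     (\<forall>k \<in> {1..n+1}. netflow H f k = v k)}"

text \<open>Noncrossing trees on L = positions {..<l}, R = positions {..<r}: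
  a tree edge (p,q) joins the p-th element of L with the q-th element of R.\<close>
definition bip_connected :: "nat \<Rightarrow> nat \<Rightarrow> (nat \<times> nat) set \<Rightarrow> bool" where
  "bip_connected l r T \<longleftrightarrow>
     (let E = {(Inl p, Inr q) | p q. (p, q) \<in> T};
          V = (Inl ` {..<l} \<union> Inr ` {..<r}) :: (nat + nat) set
      in \<forall>x \<in> V. \<forall>y \<in> V. (x, y) \<in> (E \<union> E\<inverse>)\<^sup>*)"

definition nc_trees :: "nat \<Rightarrow> nat \<Rightarrow> (nat \<times> nat) set set" where
  "nc_trees l r = {T. T \<subseteq> {..<l} \<times> {..<r} \<and> card T + 1 = l + r \<and> bip_connected l r T \<and>
      (\<forall>p q t u. (p, q) \<in> T \<longrightarrow> (t, u) \<in> T \<longrightarrow> p < t \<longrightarrow> \<not> u < q)}"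

text \<open>Compounded reduction at vertex i. Ls, Rs are the fixed orderings of the incoming
  and outgoing edges of i; if a i > 0 the extra symbol v_i is position length Ls of L.\<close>
definition reduce_child ::
  "nat \<Rightarrow> (nat \<Rightarrow> nat) \<Rightarrow> edge list \<Rightarrow> edge list \<Rightarrow> graph \<Rightarrow> nat \<Rightarrow> (nat \<times> nat) set \<Rightarrow> graph" where
  "reduce_child n a Ls Rs H i T =
     (H - mset Ls - mset Rs)
     + image_mset (\<lambda>(p, q). if p < length Ls then (fst (Ls ! p), snd (Rs ! q))
                                         else (i, snd (Rs ! q))) (mset_set T)
     + (if a i = 0 then {#(i, n + 1)#} else {#})"

definition reduce_children ::
  "nat \<Rightarrow> (nat \<Rightarrow> nat) \<Rightarrow> (graph \<Rightarrow> nat \<Rightarrow> edge list) \<Rightarrow> (graph \<Rightarrow> nat \<Rightarrow> edge list)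
     \<Rightarrow> nat \<Rightarrow> graph \<Rightarrow> graph multiset" where
  "reduce_children n a ordI ordO i H =
     (let Ls = ordI H i; Rs = ordO H i in
       image_mset (reduce_child n a Ls Rs H i)
         (mset_set (nc_trees (length Ls + (if a i > 0 then 1 else 0)) (length Rs))))"

definition reduce_step ::
  "nat \<Rightarrow> (nat \<Rightarrow> nat) \<Rightarrow> (graph \<Rightarrow> nat \<Rightarrow> edge list) \<Rightarrow> (graph \<Rightarrow> nat \<Rightarrow> edge list)
     \<Rightarrow> nat \<Rightarrow> graph multiset \<Rightarrow> graph multiset" where
  "reduce_step n a ordI ordO i Hs =
     sum_mset (image_mset (\<lambda>H. if (\<exists>e \<in># H. snd e = i) then reduce_children n a ordI ordO i H
                               else {#H#}) Hs)"

definition canon_leaves ::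
  "nat \<Rightarrow> (nat \<Rightarrow> nat) \<Rightarrow> (graph \<Rightarrow> nat \<Rightarrow> edge list) \<Rightarrow> (graph \<Rightarrow> nat \<Rightarrow> edge list)
     \<Rightarrow> graph \<Rightarrow> graph multiset" where
  "canon_leaves n a ordI ordO G =
     foldl (\<lambda>Hs i. reduce_step n a ordI ordO i Hs) {#G#} (rev [2..<Suc n])"

end

theory Submission
  imports Defs
begin

text \<open>Let every edge carry one unit more than its flow, counted at its tail.  Then the flows on a
  graph \<open>H\<close> with net flow \<open>m - outd\<^sub>H\<close> are the flows with excess \<open>m\<close>, a condition that no longer
  depends on \<open>H\<close>.  For a compounded reduction at a vertex \<open>i\<close>, the pairs of a noncrossing tree \<open>T\<close>
  and such a flow on the child \<open>H\<^sub>T\<close> correspond bijectively to the flows on \<open>H\<close>: the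
  noncrossing trees are the staircase paths in the grid of incoming times outgoing edges at \<open>i\<close>,
  and the northwest corner rule distributes the incoming flows over the outgoing ones along
  exactly one staircase.  So the flow count of \<open>G\<close> is the sum of those of the leaves of the
  canonical tree.  A leaf only has edges \<open>(x, n + 1)\<close>, so its only flow is zero, with excess its
  outdegrees: it contributes \<open>1\<close> if it is \<open>G(m)\<close> and \<open>0\<close> otherwise.  That \<open>G(m)\<close> is a leaf
  forces \<open>m\<^sub>i = 1\<close> whenever \<open>a\<^sub>i = 0\<close> and \<open>i\<close> gets reduced, which the bijection needs because the
  reduction then adds the edge \<open>(i, n + 1)\<close>.\<close>

section \<open>Noncrossing trees as staircases\<close>

definition noncrossing :: "(nat \<times> nat) set \<Rightarrow> bool" where
  "noncrossing T \<longleftrightarrow> (\<forall>p q t u. (p, q) \<in> T \<longrightarrow> (t, u) \<in> T \<longrightarrow> p < t \<longrightarrow> \<not> u < q)"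

text \<open>A noncrossing set of \<open>l + k - 1\<close> cells of the \<open>l \<times> k\<close> grid is a lattice path from
  \<open>(0, 0)\<close> to \<open>(l - 1, k - 1)\<close>; these are exactly the noncrossing trees (\<open>nc_trees_eq\<close>).\<close>
definition staircase :: "nat \<Rightarrow> nat \<Rightarrow> (nat \<times> nat) set \<Rightarrow> bool" where
  "staircase l k T \<longleftrightarrow> T \<subseteq> {..<l} \<times> {..<k} \<and> noncrossing T \<and> card T + 1 = l + k"

definition shift_row :: "(nat \<times> nat) set \<Rightarrow> (nat \<times> nat) set" where
  "shift_row T = (\<lambda>(p, q). (Suc p, q)) ` T"

definition shift_col :: "(nat \<times> nat) set \<Rightarrow> (nat \<times> nat) set" where
  "shift_col T = (\<lambda>(p, q). (p, Suc q)) ` T"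

lemma mem_shift_row: "(p, q) \<in> shift_row T \<longleftrightarrow> 0 < p \<and> (p - 1, q) \<in> T"
  unfolding shift_row_def by (cases p) force+

lemma mem_shift_col: "(p, q) \<in> shift_col T \<longleftrightarrow> 0 < q \<and> (p, q - 1) \<in> T"
  unfolding shift_col_def by (cases q) force+

lemma shift_col_transpose: "shift_col T = prod.swap ` shift_row (prod.swap ` T)"
proof (rule set_eqI)
  fix x :: "nat \<times> nat"
  show "x \<in> shift_col T \<longleftrightarrow> x \<in> prod.swap ` shift_row (prod.swap ` T)"
    by (cases x) (force simp: mem_shift_row mem_shift_col)
qed

lemma noncrossing_transpose: "noncrossing (prod.swap ` T) \<longleftrightarrow> noncrossing T"
  unfolding noncrossing_def by auto

lemma staircase_transpose: "staircase k l (prod.swap ` T) \<longleftrightarrow> staircase l k T"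
  unfolding staircase_def noncrossing_transpose
  by (auto simp: card_image add.commute)

lemma staircase_finite: "staircase l k T \<Longrightarrow> finite T"
  unfolding staircase_def by (meson finite_SigmaI finite_lessThan finite_subset)

lemma finite_staircases: "finite (Collect (staircase l k))"
  by (rule finite_subset[of _ "Pow ({..<l} \<times> {..<k})"]) (auto simp: staircase_def)

lemma noncrossing_inj_on_diagonal: "noncrossing T \<Longrightarrow> inj_on (\<lambda>(p, q). p + q) T"
  unfolding inj_on_def noncrossing_def
  by (clarsimp, metis nat_neq_iff add_left_cancel add_less_le_mono not_less)

lemma staircase_diagonals:
  assumes "staircase l k T" "1 \<le> l" "1 \<le> k"
  shows "(\<lambda>(p, q). p + q) ` T = {..<l + k - 1}"
proof (rule card_subset_eq)
  show "(\<lambda>(p, q). p + q) ` T \<subseteq> {..<l + k - 1}"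
    using assms unfolding staircase_def by auto
  have "card ((\<lambda>(p, q). p + q) ` T) = card T"
    using assms noncrossing_inj_on_diagonal card_image unfolding staircase_def by blast
  then show "card ((\<lambda>(p, q). p + q) ` T) = card {..<l + k - 1}"
    using assms unfolding staircase_def by (simp; linarith)
qed simp

lemma staircase_origin:
  assumes "staircase l k T" "1 \<le> l" "1 \<le> k"
  shows "(0, 0) \<in> T"
proof -
  have "0 \<in> (\<lambda>(p, q). p + q) ` T" using staircase_diagonals[OF assms] assms by simp
  then show ?thesis by auto
qed

lemma staircase_one_row:
  assumes "1 \<le> k" shows "staircase 1 k T \<longleftrightarrow> T = {0} \<times> {..<k}"
proof
  assume "staircase 1 k T"
  then have "T \<subseteq> {0} \<times> {..<k}" "card T = card ({0::nat} \<times> {..<k})"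
    unfolding staircase_def by (auto simp: card_cartesian_product)
  then show "T = {0} \<times> {..<k}" by (simp add: card_subset_eq)
qed (auto simp: staircase_def noncrossing_def card_cartesian_product)

lemma staircase_one_col:
  assumes "1 \<le> l" shows "staircase l 1 T \<longleftrightarrow> T = {..<l} \<times> {0}"
proof
  assume "staircase l 1 T"
  then have "T \<subseteq> {..<l} \<times> {0}" "card T = card ({..<l} \<times> {0::nat})"
    unfolding staircase_def by (auto simp: card_cartesian_product)
  then show "T = {..<l} \<times> {0}" by (simp add: card_subset_eq)
qed (auto simp: staircase_def noncrossing_def card_cartesian_product)

lemma staircase_shift_row:
  assumes "staircase l k T" "1 \<le> k"
  shows "staircase (Suc l) k (insert (0, 0) (shift_row T))"
proof -
  have "card (shift_row T) = card T"
    unfolding shift_row_def by (rule card_image) (auto simp: inj_on_def)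
  moreover have "(0, 0) \<notin> shift_row T" by (simp add: mem_shift_row)
  ultimately have "card (insert (0, 0) (shift_row T)) = Suc (card T)"
    using staircase_finite[OF assms(1)] by (simp add: shift_row_def)
  then show ?thesis using assms unfolding staircase_def noncrossing_def
    by (auto simp: mem_shift_row)
qed

lemma staircase_shift_col:
  assumes "staircase l k T" "1 \<le> l"
  shows "staircase l (Suc k) (insert (0, 0) (shift_col T))"
proof -
  have "staircase (Suc k) l (insert (0, 0) (shift_row (prod.swap ` T)))"
    using assms staircase_transpose by (intro staircase_shift_row) auto
  then have "staircase l (Suc k) (prod.swap ` insert (0, 0) (shift_row (prod.swap ` T)))"
    by (simp only: staircase_transpose)
  then show ?thesis unfolding shift_col_transpose by simp
qed

lemma staircase_peel_row:
  assumes T: "staircase l k T" and T10: "(1, 0) \<in> T"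
  defines "D \<equiv> {(p, q). (Suc p, q) \<in> T}"
  shows "T = insert (0, 0) (shift_row D)" and "staircase (l - 1) k D"
proof -
  have box: "T \<subseteq> {..<l} \<times> {..<k}" and nc: "noncrossing T" and card: "card T + 1 = l + k"
    using T unfolding staircase_def by auto
  have row0: "q = 0" if "(0, q) \<in> T" for q
    using nc T10 that unfolding noncrossing_def by (metis less_one neq0_conv)
  have "(0, 0) \<in> T" using staircase_origin[OF T] T10 box by fastforce
  then show T_eq: "T = insert (0, 0) (shift_row D)"
  proof (intro set_eqI)
    fix x :: "nat \<times> nat"
    show "x \<in> T \<longleftrightarrow> x \<in> insert (0, 0) (shift_row D)"
      using row0 \<open>(0, 0) \<in> T\<close> by (cases x; case_tac "fst x") (auto simp: D_def mem_shift_row)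
  qed
  have "(0, 0) \<notin> shift_row D" by (simp add: mem_shift_row)
  moreover have "card (shift_row D) = card D"
    unfolding shift_row_def by (rule card_image) (auto simp: inj_on_def)
  moreover have D_box: "D \<subseteq> {..<l - 1} \<times> {..<k}" using box by (auto simp: D_def)
  then have "finite D" by (rule finite_subset) simp
  ultimately have "card T = Suc (card D)"
    by (subst T_eq) (simp add: shift_row_def)
  moreover note D_box
  moreover have "noncrossing D" using nc unfolding noncrossing_def D_def by auto
  moreover have "1 < l" using T10 box by auto
  ultimately show "staircase (l - 1) k D" using card unfolding staircase_def by auto
qed

lemma staircase_cases:
  assumes T: "staircase l k T" and "1 \<le> l" "1 \<le> k" "3 \<le> l + k"
  obtains D where "2 \<le> l" "T = insert (0, 0) (shift_row D)" "staircase (l - 1) k D"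
  | D where "2 \<le> k" "T = insert (0, 0) (shift_col D)" "staircase l (k - 1) D"
proof -
  have "1 \<in> (\<lambda>(p, q). p + q) ` T" using staircase_diagonals[OF assms(1-3)] assms by simp
  then obtain p q where "(p, q) \<in> T" "p + q = 1" by auto
  then have "(1, 0) \<in> T \<or> (0, 1) \<in> T" by (cases p) auto
  then show ?thesis
  proof
    assume "(1, 0) \<in> T"
    moreover have "2 \<le> l" using calculation T unfolding staircase_def by auto
    ultimately show ?thesis using that(1) staircase_peel_row[OF T] by blast
  next
    assume "(0, 1) \<in> T"
    then have T': "staircase k l (prod.swap ` T)" and "(1, 0) \<in> prod.swap ` T"
      using T staircase_transpose by (auto intro: image_eqI[where x="(0, 1)"])
    note peel = staircase_peel_row[OF this]
    define D where "D = {(p, q). (Suc p, q) \<in> prod.swap ` T}"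
    have "T = insert (0, 0) (shift_col (prod.swap ` D))"
      using arg_cong[OF peel(1), of "image prod.swap"]
      unfolding shift_col_transpose D_def image_image by simp
    moreover have "staircase l (k - 1) (prod.swap ` D)"
      using peel(2) staircase_transpose unfolding D_def by blast
    moreover have "2 \<le> k" using \<open>(0, 1) \<in> T\<close> T unfolding staircase_def by auto
    ultimately show ?thesis using that(2) by blast
  qed
qed

lemma staircase_row_nonempty:
  "staircase l k T \<Longrightarrow> 1 \<le> k \<Longrightarrow> p < l \<Longrightarrow> \<exists>q. (p, q) \<in> T"
proof (induction "l + k" arbitrary: l k T p rule: less_induct)
  case less
  show ?case
  proof (cases "l = 1 \<or> k = 1")
    case True
    then have "l = 1 \<and> T = {0} \<times> {..<k} \<or> k = 1 \<and> T = {..<l} \<times> {0}"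
      using less.prems staircase_one_row staircase_one_col by auto
    then show ?thesis
    proof
      assume "l = 1 \<and> T = {0} \<times> {..<k}"
      then show ?thesis using less.prems by (intro exI[of _ 0]) auto
    qed (use less.prems in auto)
  next
    case False
    with less.prems have "1 \<le> l" "3 \<le> l + k" by linarith+
    from less.prems(1) \<open>1 \<le> l\<close> less.prems(2) \<open>3 \<le> l + k\<close> show ?thesis
    proof (cases rule: staircase_cases)
      case (1 D)
      show ?thesis
      proof (cases p)
        case (Suc p')
        have "\<exists>q. (p', q) \<in> D" by (rule less.hyps) (use 1 less.prems Suc in auto)
        then obtain q where "(p', q) \<in> D" ..
        then show ?thesis using 1 Suc by (auto simp: mem_shift_row)
      qed (use 1 in auto)
    next
      case (2 D)
      have "\<exists>q. (p, q) \<in> D" by (rule less.hyps) (use 2 less.prems in auto)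
      then obtain q where "(p, q) \<in> D" ..
      then show ?thesis using 2 by (auto simp: mem_shift_col)
    qed
  qed
qed

definition linked :: "(nat \<times> nat) set \<Rightarrow> (nat + nat) rel" where
  "linked T = ({(Inl p, Inr q) | p q. (p, q) \<in> T} \<union> {(Inl p, Inr q) | p q. (p, q) \<in> T}\<inverse>)\<^sup>*"

lemma linked_sym: "(x, y) \<in> linked T \<Longrightarrow> (y, x) \<in> linked T"
  unfolding linked_def by (rule symD[OF sym_rtrancl[OF sym_Un_converse]])

lemma linked_edge: "(p, q) \<in> T \<Longrightarrow> (Inl p, Inr q) \<in> linked T"
  unfolding linked_def by (intro r_into_rtrancl UnI1) blast

lemma linked_refl: "(x, x) \<in> linked T"
  unfolding linked_def by simp

lemma linked_trans: "(x, y) \<in> linked T \<Longrightarrow> (y, z) \<in> linked T \<Longrightarrow> (x, z) \<in> linked T"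
  unfolding linked_def by (rule rtrancl_trans)

lemma linked_map:
  assumes "\<And>p q. (p, q) \<in> D \<Longrightarrow> (f p, g q) \<in> T" and "(x, y) \<in> linked D"
  shows "(map_sum f g x, map_sum f g y) \<in> linked T"
  using assms(2) unfolding linked_def
proof (induction rule: rtrancl_induct)
  case (step y z)
  then have "(map_sum f g y, map_sum f g z) \<in>
      {(Inl p, Inr q) | p q. (p, q) \<in> T} \<union> {(Inl p, Inr q) | p q. (p, q) \<in> T}\<inverse>"
    using assms(1) by fastforce
  with step.IH show ?case by (rule rtrancl_into_rtrancl)
qed simp

lemma staircase_linked:
  "staircase l k T \<Longrightarrow> 1 \<le> l \<Longrightarrow> 1 \<le> k \<Longrightarrow> x \<in> Inl ` {..<l} \<union> Inr ` {..<k}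
   \<Longrightarrow> (Inl 0, x) \<in> linked T"
proof (induction "l + k" arbitrary: l k T x rule: less_induct)
  case less
  have origin: "(Inl 0, Inr 0) \<in> linked T"
    using linked_edge staircase_origin less.prems by blast
  show ?case
  proof (cases "l = 1 \<or> k = 1")
    case True
    then consider "l = 1" "T = {0} \<times> {..<k}" | "k = 1" "T = {..<l} \<times> {0}"
      using less.prems staircase_one_row staircase_one_col by blast
    then show ?thesis
    proof cases
      case 1
      then show ?thesis using less.prems(4) by (auto intro: linked_refl linked_edge)
    next
      case 2
      have "(Inl 0, Inl p) \<in> linked T" if "p < l" for p
        using linked_trans[OF origin linked_sym[OF linked_edge[of p 0]]] that 2 by simp
      then show ?thesis using less.prems(4) 2 origin by auto
    qed
  next
    case False
    with less.prems have "3 \<le> l + k" by linarith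
    with less.prems(1-3) show ?thesis
    proof (cases rule: staircase_cases)
      case (1 D)
      have IH: "(Inl 1, map_sum Suc id y) \<in> linked T" if "y \<in> Inl ` {..<l - 1} \<union> Inr ` {..<k}" for y
        using linked_map[of D Suc id T, OF _ less.hyps[of "l - 1" k D y]] that 1 less.prems
        by (auto simp: mem_shift_row)
      have "(Inl 1, Inr 0) \<in> linked T" using IH[of "Inr 0"] less.prems by simp
      then have "(Inl 0, Inl 1) \<in> linked T" by (rule linked_trans[OF origin linked_sym])
      then have "(Inl 0, map_sum Suc id y) \<in> linked T" if "y \<in> Inl ` {..<l - 1} \<union> Inr ` {..<k}" for y
        using IH[OF that] by (rule linked_trans)
      moreover have "x = Inl 0 \<or> (\<exists>y \<in> Inl ` {..<l - 1} \<union> Inr ` {..<k}. x = map_sum Suc id y)"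
      proof (cases x)
        case (Inl p)
        then show ?thesis using less.prems(4) by (cases p) (auto intro!: bexI[of _ "Inl (p - 1)"])
      next
        case (Inr q)
        then show ?thesis using less.prems(4) by (auto intro!: bexI[of _ "Inr q"])
      qed
      ultimately show ?thesis using linked_refl by blast
    next
      case (2 D)
      have IH: "(Inl 0, map_sum id Suc y) \<in> linked T" if "y \<in> Inl ` {..<l} \<union> Inr ` {..<k - 1}" for y
        using linked_map[of D id Suc T, OF _ less.hyps[of l "k - 1" D y]] that 2 less.prems
        by (auto simp: mem_shift_col)
      moreover have "x = Inr 0 \<or> (\<exists>y \<in> Inl ` {..<l} \<union> Inr ` {..<k - 1}. x = map_sum id Suc y)"
      proof (cases x)
        case (Inr q)
        then show ?thesis using less.prems(4) by (cases q) (auto intro!: bexI[of _ "Inr (q - 1)"])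
      next
        case (Inl p)
        then show ?thesis using less.prems(4) by (auto intro!: bexI[of _ "Inl p"])
      qed
      ultimately show ?thesis using origin by blast
    qed
  qed
qed

lemma nc_trees_eq:
  assumes "1 \<le> l" "1 \<le> k"
  shows "nc_trees l k = Collect (staircase l k)"
proof -
  have "bip_connected l k T" if "staircase l k T" for T
    unfolding bip_connected_def Let_def linked_def[symmetric]
    using staircase_linked[OF that assms] by (blast intro: linked_trans linked_sym)
  then show ?thesis unfolding nc_trees_def staircase_def noncrossing_def by auto
qed

section \<open>Splitting flows along a staircase\<close>

definition row_load :: "nat \<Rightarrow> (nat \<times> nat) set \<Rightarrow> (nat \<times> nat \<Rightarrow> nat) \<Rightarrow> nat \<Rightarrow> nat" where
  "row_load k T \<phi> p = (\<Sum>q<k. if (p, q) \<in> T then \<phi> (p, q) + 1 else 0)"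

definition col_load :: "nat \<Rightarrow> (nat \<times> nat) set \<Rightarrow> (nat \<times> nat \<Rightarrow> nat) \<Rightarrow> nat \<Rightarrow> nat" where
  "col_load l T \<phi> q = (\<Sum>p<l. if (p, q) \<in> T then \<phi> (p, q) else 0)"

text \<open>The flow \<open>\<alpha> p\<close> of the \<open>p\<close>-th incoming and \<open>\<beta> q\<close> of the \<open>q\<close>-th outgoing edge of a vertex
  are rerouted along the edges of \<open>T\<close>.  Every edge keeps one extra unit at its tail (see
  \<open>excess\<close>), hence the \<open>+ 1\<close> in \<open>row_load\<close> and in \<open>\<alpha> p + 1\<close>.\<close>
definition tree_split ::
  "nat \<Rightarrow> nat \<Rightarrow> (nat \<Rightarrow> nat) \<Rightarrow> (nat \<Rightarrow> nat) \<Rightarrow> (nat \<times> nat) set \<Rightarrow> (nat \<times> nat \<Rightarrow> nat) \<Rightarrow> bool"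
  where "tree_split l k \<alpha> \<beta> T \<phi> \<longleftrightarrow> staircase l k T \<and> (\<forall>x. x \<notin> T \<longrightarrow> \<phi> x = 0) \<and>
     (\<forall>p<l. row_load k T \<phi> p = \<alpha> p + 1) \<and> (\<forall>q<k. col_load l T \<phi> q = \<beta> q)"

lemma row_load_shift_row_zero:
  "0 < k \<Longrightarrow> row_load k (insert (0, 0) (shift_row T)) \<phi> 0 = \<phi> (0, 0) + 1"
  unfolding row_load_def by (simp add: mem_shift_row cong: if_cong)

lemma row_load_shift_row_Suc:
  "row_load k (insert (0, 0) (shift_row T)) \<phi> (Suc p) = row_load k T (\<lambda>(p, q). \<phi> (Suc p, q)) p"
  unfolding row_load_def by (rule sum.cong) (auto simp: mem_shift_row)

lemma col_load_shift_row:
  "col_load (Suc l) (insert (0, 0) (shift_row T)) \<phi> q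
   = (if q = 0 then \<phi> (0, 0) else 0) + col_load l T (\<lambda>(p, q). \<phi> (Suc p, q)) q"
  unfolding col_load_def sum.lessThan_Suc_shift by (auto simp: mem_shift_row intro!: sum.cong)

lemma col_load_shift_col_zero:
  "0 < l \<Longrightarrow> col_load l (insert (0, 0) (shift_col T)) \<phi> 0 = \<phi> (0, 0)"
  unfolding col_load_def by (simp add: mem_shift_col cong: if_cong)

lemma col_load_shift_col_Suc:
  "col_load l (insert (0, 0) (shift_col T)) \<phi> (Suc q) = col_load l T (\<lambda>(p, q). \<phi> (p, Suc q)) q"
  unfolding col_load_def by (rule sum.cong) (auto simp: mem_shift_col)

lemma row_load_shift_col:
  "row_load (Suc k) (insert (0, 0) (shift_col T)) \<phi> p
   = (if p = 0 then \<phi> (0, 0) + 1 else 0) + row_load k T (\<lambda>(p, q). \<phi> (p, Suc q)) p"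
  unfolding row_load_def sum.lessThan_Suc_shift by (auto simp: mem_shift_col intro!: sum.cong)

lemma row_load_ge: "(p, q) \<in> T \<Longrightarrow> q < k \<Longrightarrow> \<phi> (p, q) + 1 \<le> row_load k T \<phi> p"
  unfolding row_load_def by (rule order_trans[OF _ member_le_sum[of q]]) auto

lemma row_load_pos: "staircase l k T \<Longrightarrow> 1 \<le> k \<Longrightarrow> p < l \<Longrightarrow> 1 \<le> row_load k T \<phi> p"
  using staircase_row_nonempty[of l k T p] row_load_ge[of p _ T k \<phi>]
  unfolding staircase_def by fastforce

lemma sum_over_box:
  fixes f :: "nat \<times> nat \<Rightarrow> 'a::comm_monoid_add"
  assumes "T \<subseteq> {..<l} \<times> {..<k}"
  shows "(\<Sum>p<l. \<Sum>q<k. if (p, q) \<in> T then f (p, q) else 0) = (\<Sum>x\<in>T. f x)"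
proof -
  have "(\<Sum>p<l. \<Sum>q<k. if (p, q) \<in> T then f (p, q) else 0)
      = (\<Sum>x\<in>{..<l} \<times> {..<k}. if x \<in> T then f x else 0)"
    by (simp add: sum.cartesian_product)
  also have "\<dots> = sum f ({..<l} \<times> {..<k} \<inter> T)"
    by (rule sum.inter_restrict[symmetric]) simp
  also have "{..<l} \<times> {..<k} \<inter> T = T" using assms by blast
  finally show ?thesis .
qed

lemma staircase_load_balance:
  assumes "staircase l k T"
  shows "(\<Sum>p<l. row_load k T \<phi> p) + 1 = (\<Sum>q<k. col_load l T \<phi> q) + l + k"
proof -
  have box: "T \<subseteq> {..<l} \<times> {..<k}" and card: "card T + 1 = l + k"
    using assms unfolding staircase_def by auto
  have "(\<Sum>p<l. row_load k T \<phi> p) = (\<Sum>x\<in>T. \<phi> x) + card T"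
    unfolding row_load_def by (subst sum_over_box[OF box]) (simp add: sum_Suc)
  moreover have "(\<Sum>q<k. col_load l T \<phi> q) = (\<Sum>x\<in>T. \<phi> x)"
    unfolding col_load_def by (subst sum.swap) (rule sum_over_box[OF box])
  ultimately show ?thesis using card by simp
qed

lemma tree_split_one_row:
  assumes "1 \<le> k"
  shows "tree_split 1 k \<alpha> \<beta> T \<phi> \<longleftrightarrow> T = {0} \<times> {..<k} \<and>
    \<phi> = (\<lambda>(p, q). if p = 0 \<and> q < k then \<beta> q else 0) \<and> \<alpha> 0 + 1 = (\<Sum>q<k. \<beta> q) + k"
    (is "_ \<longleftrightarrow> T = ?T \<and> \<phi> = ?\<phi> \<and> _")
proof -
  have row: "row_load k ?T \<phi> 0 = (\<Sum>q<k. \<phi> (0, q)) + k" for \<phi>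
  proof -
    have "row_load k ?T \<phi> 0 = (\<Sum>q<k. \<phi> (0, q) + 1)"
      unfolding row_load_def by (rule sum.cong) auto
    then show ?thesis by (simp add: sum_Suc)
  qed
  have col: "col_load 1 ?T \<phi> q = (if q < k then \<phi> (0, q) else 0)" for \<phi> q
    unfolding col_load_def by simp
  have sum_\<phi>: "(\<Sum>q<k. ?\<phi> (0, q)) = (\<Sum>q<k. \<beta> q)" by simp
  show ?thesis
  proof
    assume S: "tree_split 1 k \<alpha> \<beta> T \<phi>"
    then have T: "T = ?T" using staircase_one_row[OF assms] unfolding tree_split_def by blast
    have "\<phi> (p, q) = ?\<phi> (p, q)" for p q
      using S col[of \<phi> q] unfolding tree_split_def T by (cases "p = 0 \<and> q < k") auto
    then have \<phi>: "\<phi> = ?\<phi>" by (intro ext) (auto split: prod.split)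
    have "\<alpha> 0 + 1 = row_load k ?T \<phi> 0" using S unfolding tree_split_def T by simp
    then show "T = ?T \<and> \<phi> = ?\<phi> \<and> \<alpha> 0 + 1 = (\<Sum>q<k. \<beta> q) + k"
      unfolding row \<phi> sum_\<phi> using T by simp
  next
    assume "T = ?T \<and> \<phi> = ?\<phi> \<and> \<alpha> 0 + 1 = (\<Sum>q<k. \<beta> q) + k"
    then show "tree_split 1 k \<alpha> \<beta> T \<phi>"
      unfolding tree_split_def using staircase_one_row[OF assms] row col sum_\<phi> by auto
  qed
qed

lemma tree_split_one_col:
  assumes "1 \<le> l"
  shows "tree_split l 1 \<alpha> \<beta> T \<phi> \<longleftrightarrow> T = {..<l} \<times> {0} \<and>
    \<phi> = (\<lambda>(p, q). if q = 0 \<and> p < l then \<alpha> p else 0) \<and> (\<Sum>p<l. \<alpha> p) = \<beta> 0"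
    (is "_ \<longleftrightarrow> T = ?T \<and> \<phi> = ?\<phi> \<and> _")
proof -
  have row: "row_load 1 ?T \<phi> p = (if p < l then \<phi> (p, 0) + 1 else 0)" for \<phi> p
    unfolding row_load_def by simp
  have col: "col_load l ?T \<phi> 0 = (\<Sum>p<l. \<phi> (p, 0))" for \<phi>
    unfolding col_load_def by simp
  have sum_\<phi>: "(\<Sum>p<l. ?\<phi> (p, 0)) = (\<Sum>p<l. \<alpha> p)" by simp
  show ?thesis
  proof
    assume S: "tree_split l 1 \<alpha> \<beta> T \<phi>"
    then have T: "T = ?T" using staircase_one_col[OF assms] unfolding tree_split_def by blast
    have "\<phi> (p, q) = ?\<phi> (p, q)" for p q
      using S row[of \<phi> p] unfolding tree_split_def T by (cases "q = 0 \<and> p < l") auto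
    then have \<phi>: "\<phi> = ?\<phi>" by (intro ext) (auto split: prod.split)
    have "\<beta> 0 = col_load l ?T \<phi> 0" using S unfolding tree_split_def T by simp
    then show "T = ?T \<and> \<phi> = ?\<phi> \<and> (\<Sum>p<l. \<alpha> p) = \<beta> 0"
      unfolding col \<phi> sum_\<phi> using T by simp
  next
    assume "T = ?T \<and> \<phi> = ?\<phi> \<and> (\<Sum>p<l. \<alpha> p) = \<beta> 0"
    then show "tree_split l 1 \<alpha> \<beta> T \<phi>"
      unfolding tree_split_def using staircase_one_col[OF assms] row col sum_\<phi> by auto
  qed
qed

lemma tree_split_shift_row:
  assumes S: "tree_split l k (\<lambda>p. \<alpha> (Suc p)) (\<beta>(0 := \<beta> 0 - \<alpha> 0)) T \<phi>"
    and le: "\<alpha> 0 \<le> \<beta> 0" and k: "1 \<le> k"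
  defines "\<psi> \<equiv> \<lambda>(p, q). if p = 0 then (if q = 0 then \<alpha> 0 else 0) else \<phi> (p - 1, q)"
  shows "tree_split (Suc l) k \<alpha> \<beta> (insert (0, 0) (shift_row T)) \<psi>"
proof -
  have shifted: "(\<lambda>(p, q). \<psi> (Suc p, q)) = \<phi>" unfolding \<psi>_def by auto
  show ?thesis unfolding tree_split_def
  proof (intro conjI allI impI)
    show "staircase (Suc l) k (insert (0, 0) (shift_row T))"
      using S k staircase_shift_row unfolding tree_split_def by blast
    show "\<psi> x = 0" if "x \<notin> insert (0, 0) (shift_row T)" for x
      using that S unfolding \<psi>_def tree_split_def by (cases x) (auto simp: mem_shift_row)
    show "row_load k (insert (0, 0) (shift_row T)) \<psi> p = \<alpha> p + 1" if "p < Suc l" for p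
    proof (cases p)
      case 0
      then show ?thesis using row_load_shift_row_zero k by (simp add: \<psi>_def)
    next
      case (Suc p')
      then show ?thesis using S that unfolding Suc row_load_shift_row_Suc shifted tree_split_def by simp
    qed
    show "col_load (Suc l) (insert (0, 0) (shift_row T)) \<psi> q = \<beta> q" if "q < k" for q
      using S that le unfolding col_load_shift_row shifted tree_split_def by (auto simp: \<psi>_def)
  qed
qed

lemma tree_split_shift_col:
  assumes S: "tree_split l k (\<alpha>(0 := \<alpha> 0 - \<beta> 0 - 1)) (\<lambda>q. \<beta> (Suc q)) T \<phi>"
    and less: "\<beta> 0 < \<alpha> 0" and l: "1 \<le> l"
  defines "\<psi> \<equiv> \<lambda>(p, q). if q = 0 then (if p = 0 then \<beta> 0 else 0) else \<phi> (p, q - 1)"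
  shows "tree_split l (Suc k) \<alpha> \<beta> (insert (0, 0) (shift_col T)) \<psi>"
proof -
  have shifted: "(\<lambda>(p, q). \<psi> (p, Suc q)) = \<phi>" unfolding \<psi>_def by auto
  show ?thesis unfolding tree_split_def
  proof (intro conjI allI impI)
    show "staircase l (Suc k) (insert (0, 0) (shift_col T))"
      using S l staircase_shift_col unfolding tree_split_def by blast
    show "\<psi> x = 0" if "x \<notin> insert (0, 0) (shift_col T)" for x
      using that S unfolding \<psi>_def tree_split_def by (cases x) (auto simp: mem_shift_col)
    show "row_load (Suc k) (insert (0, 0) (shift_col T)) \<psi> p = \<alpha> p + 1" if "p < l" for p
      using S that less unfolding row_load_shift_col shifted tree_split_def by (auto simp: \<psi>_def)
    show "col_load l (insert (0, 0) (shift_col T)) \<psi> q = \<beta> q" if "q < Suc k" for q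
    proof (cases q)
      case 0
      then show ?thesis using col_load_shift_col_zero l by (simp add: \<psi>_def)
    next
      case (Suc q')
      then show ?thesis using S that unfolding Suc col_load_shift_col_Suc shifted tree_split_def by simp
    qed
  qed
qed

lemma tree_split_peel_row:
  assumes S: "tree_split (Suc l) k \<alpha> \<beta> (insert (0, 0) (shift_row D)) \<phi>"
    and D: "staircase l k D" and k: "1 \<le> k"
  shows "\<phi> (0, 0) = \<alpha> 0" "\<alpha> 0 \<le> \<beta> 0"
    "tree_split l k (\<lambda>p. \<alpha> (Suc p)) (\<beta>(0 := \<beta> 0 - \<alpha> 0)) D (\<lambda>(p, q). \<phi> (Suc p, q))"
proof -
  have supp: "\<And>x. x \<notin> insert (0, 0) (shift_row D) \<Longrightarrow> \<phi> x = 0"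
    using S unfolding tree_split_def by blast
  have rows: "\<And>p. p < Suc l \<Longrightarrow> row_load k (insert (0, 0) (shift_row D)) \<phi> p = \<alpha> p + 1"
    and cols: "\<And>q. q < k \<Longrightarrow> col_load (Suc l) (insert (0, 0) (shift_row D)) \<phi> q = \<beta> q"
    using S unfolding tree_split_def by auto
  show \<phi>00: "\<phi> (0, 0) = \<alpha> 0"
    using rows[of 0] row_load_shift_row_zero[of k D \<phi>] k by simp
  have col0: "\<alpha> 0 + col_load l D (\<lambda>(p, q). \<phi> (Suc p, q)) 0 = \<beta> 0"
    using cols[of 0] col_load_shift_row[of l D \<phi> 0] k \<phi>00 by simp
  then show "\<alpha> 0 \<le> \<beta> 0" by simp
  show "tree_split l k (\<lambda>p. \<alpha> (Suc p)) (\<beta>(0 := \<beta> 0 - \<alpha> 0)) D (\<lambda>(p, q). \<phi> (Suc p, q))"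
    unfolding tree_split_def
  proof (intro conjI allI impI)
    show "staircase l k D" by (rule D)
    show "(\<lambda>(p, q). \<phi> (Suc p, q)) x = 0" if "x \<notin> D" for x
      using that supp by (cases x) (auto simp: mem_shift_row)
    show "row_load k D (\<lambda>(p, q). \<phi> (Suc p, q)) p = \<alpha> (Suc p) + 1" if "p < l" for p
      using rows[of "Suc p"] that by (simp add: row_load_shift_row_Suc)
    show "col_load l D (\<lambda>(p, q). \<phi> (Suc p, q)) q = (\<beta>(0 := \<beta> 0 - \<alpha> 0)) q" if "q < k" for q
      using cols[of q] that col0 col_load_shift_row[of l D \<phi> q] by (cases "q = 0") auto
  qed
qed

lemma tree_split_peel_col:
  assumes S: "tree_split l (Suc k) \<alpha> \<beta> (insert (0, 0) (shift_col D)) \<phi>"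
    and D: "staircase l k D" and l: "1 \<le> l" and k: "1 \<le> k"
  shows "\<phi> (0, 0) = \<beta> 0" "\<beta> 0 < \<alpha> 0"
    "tree_split l k (\<alpha>(0 := \<alpha> 0 - \<beta> 0 - 1)) (\<lambda>q. \<beta> (Suc q)) D (\<lambda>(p, q). \<phi> (p, Suc q))"
proof -
  have supp: "\<And>x. x \<notin> insert (0, 0) (shift_col D) \<Longrightarrow> \<phi> x = 0"
    using S unfolding tree_split_def by blast
  have rows: "\<And>p. p < l \<Longrightarrow> row_load (Suc k) (insert (0, 0) (shift_col D)) \<phi> p = \<alpha> p + 1"
    and cols: "\<And>q. q < Suc k \<Longrightarrow> col_load l (insert (0, 0) (shift_col D)) \<phi> q = \<beta> q"
    using S unfolding tree_split_def by auto
  show \<phi>00: "\<phi> (0, 0) = \<beta> 0"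
    using cols[of 0] col_load_shift_col_zero[of l D \<phi>] l by simp
  have row0: "\<beta> 0 + 1 + row_load k D (\<lambda>(p, q). \<phi> (p, Suc q)) 0 = \<alpha> 0 + 1"
    using rows[of 0] row_load_shift_col[of k D \<phi> 0] l \<phi>00 by simp
  moreover have "1 \<le> row_load k D (\<lambda>(p, q). \<phi> (p, Suc q)) 0"
    by (rule row_load_pos) (use D l k in auto)
  ultimately show less: "\<beta> 0 < \<alpha> 0" by simp
  show "tree_split l k (\<alpha>(0 := \<alpha> 0 - \<beta> 0 - 1)) (\<lambda>q. \<beta> (Suc q)) D (\<lambda>(p, q). \<phi> (p, Suc q))"
    unfolding tree_split_def
  proof (intro conjI allI impI)
    show "staircase l k D" by (rule D)
    show "(\<lambda>(p, q). \<phi> (p, Suc q)) x = 0" if "x \<notin> D" for x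
      using that supp by (cases x) (auto simp: mem_shift_col)
    show "row_load k D (\<lambda>(p, q). \<phi> (p, Suc q)) p = (\<alpha>(0 := \<alpha> 0 - \<beta> 0 - 1)) p + 1" if "p < l" for p
      using rows[of p] that row0 less row_load_shift_col[of k D \<phi> p] by (cases "p = 0") auto
    show "col_load l D (\<lambda>(p, q). \<phi> (p, Suc q)) q = \<beta> (Suc q)" if "q < k" for q
      using cols[of "Suc q"] that by (simp add: col_load_shift_col_Suc)
  qed
qed

lemma tree_split_cases:
  assumes S: "tree_split l k \<alpha> \<beta> T \<phi>" and "1 \<le> l" "1 \<le> k" "3 \<le> l + k"
  obtains (row) D where "2 \<le> l" "\<alpha> 0 \<le> \<beta> 0" "\<phi> (0, 0) = \<alpha> 0" "T = insert (0, 0) (shift_row D)"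
      "tree_split (l - 1) k (\<lambda>p. \<alpha> (Suc p)) (\<beta>(0 := \<beta> 0 - \<alpha> 0)) D (\<lambda>(p, q). \<phi> (Suc p, q))"
  | (col) D where "2 \<le> k" "\<beta> 0 < \<alpha> 0" "\<phi> (0, 0) = \<beta> 0" "T = insert (0, 0) (shift_col D)"
      "tree_split l (k - 1) (\<alpha>(0 := \<alpha> 0 - \<beta> 0 - 1)) (\<lambda>q. \<beta> (Suc q)) D (\<lambda>(p, q). \<phi> (p, Suc q))"
proof -
  from S have "staircase l k T" unfolding tree_split_def by blast
  from this assms(2-4) show ?thesis
  proof (cases rule: staircase_cases)
    case (1 D)
    then have "l = Suc (l - 1)" by simp
    then show ?thesis using tree_split_peel_row[of "l - 1" k \<alpha> \<beta> D \<phi>] that(1) S 1 assms by auto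
  next
    case (2 D)
    then have "k = Suc (k - 1)" by simp
    then show ?thesis using tree_split_peel_col[of l "k - 1" \<alpha> \<beta> D \<phi>] that(2) S 2 assms by auto
  qed
qed

lemma tree_split_exists:
  "1 \<le> l \<Longrightarrow> 1 \<le> k \<Longrightarrow> (\<Sum>p<l. \<alpha> p) + 1 = (\<Sum>q<k. \<beta> q) + k \<Longrightarrow> \<exists>T \<phi>. tree_split l k \<alpha> \<beta> T \<phi>"
proof (induction "l + k" arbitrary: l k \<alpha> \<beta> rule: less_induct)
  case less
  consider "l = 1" | "k = 1" | "2 \<le> l" "2 \<le> k" using less.prems by linarith
  then show ?case
  proof cases
    case 1
    then show ?thesis using less.prems
      tree_split_one_row[of k \<alpha> \<beta> _ "\<lambda>(p, q). if p = 0 \<and> q < k then \<beta> q else 0"] by auto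
  next
    case 2
    then show ?thesis using less.prems
      tree_split_one_col[of l \<alpha> \<beta> _ "\<lambda>(p, q). if q = 0 \<and> p < l then \<alpha> p else 0"] by auto
  next
    case 3
    define l' k' where "l' = l - 1" and "k' = k - 1"
    have l: "l = Suc l'" and k: "k = Suc k'" using 3 unfolding l'_def k'_def by simp_all
    have sums: "(\<Sum>p<l. \<alpha>' p) = \<alpha>' 0 + (\<Sum>p<l'. \<alpha>' (Suc p))"
      "(\<Sum>q<k. \<beta>' q) = \<beta>' 0 + (\<Sum>q<k'. \<beta>' (Suc q))" for \<alpha>' \<beta>' :: "nat \<Rightarrow> nat"
      unfolding l k by (rule sum.lessThan_Suc_shift)+
    show ?thesis
    proof (cases "\<alpha> 0 \<le> \<beta> 0")
      case True
      have "(\<Sum>p<l'. \<alpha> (Suc p)) + 1 = (\<Sum>q<k. (\<beta>(0 := \<beta> 0 - \<alpha> 0)) q) + k"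
        using less.prems(3) True unfolding sums by simp
      then have "\<exists>T \<phi>. tree_split l' k (\<lambda>p. \<alpha> (Suc p)) (\<beta>(0 := \<beta> 0 - \<alpha> 0)) T \<phi>"
        using 3 l by (intro less.hyps) auto
      then show ?thesis using tree_split_shift_row[of l' k \<alpha> \<beta>] True 3 l by fastforce
    next
      case False
      have "(\<Sum>p<l. (\<alpha>(0 := \<alpha> 0 - \<beta> 0 - 1)) p) + 1 = (\<Sum>q<k'. \<beta> (Suc q)) + k'"
        using less.prems(3) False k unfolding sums by simp
      then have "\<exists>T \<phi>. tree_split l k' (\<alpha>(0 := \<alpha> 0 - \<beta> 0 - 1)) (\<lambda>q. \<beta> (Suc q)) T \<phi>"
        using 3 k by (intro less.hyps) auto
      then show ?thesis using tree_split_shift_col[of l k' \<alpha> \<beta>] False 3 k by fastforce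
    qed
  qed
qed

lemma tree_split_unique:
  "tree_split l k \<alpha> \<beta> T \<phi> \<Longrightarrow> tree_split l k \<alpha> \<beta> T' \<phi>' \<Longrightarrow> 1 \<le> l \<Longrightarrow> 1 \<le> k \<Longrightarrow> T' = T \<and> \<phi>' = \<phi>"
proof (induction "l + k" arbitrary: l k \<alpha> \<beta> T \<phi> T' \<phi>' rule: less_induct)
  case less
  have supp: "\<phi> x = 0" "\<phi>' x = 0" if "x \<notin> T" "x \<notin> T'" for x
    using less.prems(1,2) that unfolding tree_split_def by blast+
  consider "l = 1" | "k = 1" | "3 \<le> l + k" using less.prems by linarith
  then show ?case
  proof cases
    case 1
    then show ?thesis using less.prems tree_split_one_row by simp
  next
    case 2
    then show ?thesis using less.prems tree_split_one_col by simp
  next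
    case 3
    from less.prems(1,3,4) 3 show ?thesis
    proof (cases rule: tree_split_cases)
      case (row D)
      note S = row
      from less.prems(2,3,4) 3 show ?thesis
      proof (cases rule: tree_split_cases)
        case (row D')
        have IH: "D' = D \<and> (\<lambda>(p, q). \<phi>' (Suc p, q)) = (\<lambda>(p, q). \<phi> (Suc p, q))"
          using S row 3 less.prems by (intro less.hyps[of "l - 1" k]) auto
        then have T: "T' = T" using S row by simp
        have "\<phi>' (a, b) = \<phi> (a, b)" for a b
        proof (cases a)
          case 0
          then show ?thesis using S row supp T by (cases b) (auto simp: mem_shift_row)
        next
          case (Suc a')
          then show ?thesis using fun_cong[OF conjunct2[OF IH], of "(a', b)"] by simp
        qed
        then show ?thesis using T by auto
      qed (use S in simp)
    next
      case (col D)
      note S = col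
      from less.prems(2,3,4) 3 show ?thesis
      proof (cases rule: tree_split_cases)
        case (col D')
        have IH: "D' = D \<and> (\<lambda>(p, q). \<phi>' (p, Suc q)) = (\<lambda>(p, q). \<phi> (p, Suc q))"
          using S col 3 less.prems by (intro less.hyps[of l "k - 1"]) auto
        then have T: "T' = T" using S col by simp
        have "\<phi>' (a, b) = \<phi> (a, b)" for a b
        proof (cases b)
          case 0
          then show ?thesis using S col supp T by (cases a) (auto simp: mem_shift_col)
        next
          case (Suc b')
          then show ?thesis using fun_cong[OF conjunct2[OF IH], of "(a, b')"] by simp
        qed
        then show ?thesis using T by auto
      qed (use S in simp)
    qed
  qed
qed

section \<open>Shifted flows\<close>

text \<open>The extra unit at the tail makes the demand in \<open>K_eq_flow_count\<close> independent of the graph.\<close>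
definition excess :: "edge \<Rightarrow> nat \<Rightarrow> nat \<Rightarrow> int" where
  "excess e x c = (if fst e = c then int x + 1 else 0) - (if snd e = c then int x else 0)"

definition shifted_flows :: "nat \<Rightarrow> 'j set \<Rightarrow> ('j \<Rightarrow> edge) \<Rightarrow> (nat \<Rightarrow> int) \<Rightarrow> ('j \<Rightarrow> nat) set" where
  "shifted_flows n J E t = {x. (\<forall>j. j \<notin> J \<longrightarrow> x j = 0) \<and> (\<forall>c\<in>{1..n+1}. (\<Sum>j\<in>J. excess (E j) (x j) c) = t c)}"

definition proper_edge :: "nat \<Rightarrow> edge \<Rightarrow> bool" where
  "proper_edge n e \<longleftrightarrow> 1 \<le> fst e \<and> fst e < snd e \<and> snd e \<le> n + 1"

lemma weighted_sum_excess:
  assumes "proper_edge n e"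
  shows "(\<Sum>c\<in>{1..n+1}. int c * excess e x c) = int (fst e) - int x * (int (snd e) - int (fst e))"
proof -
  have f: "fst e \<in> {1..n+1}" and s: "snd e \<in> {1..n+1}" using assms unfolding proper_edge_def by auto
  have "(\<Sum>c\<in>{1..n+1}. int c * excess e x c)
     = (\<Sum>c\<in>{1..n+1}. if c = fst e then int c * (int x + 1) else 0)
       - (\<Sum>c\<in>{1..n+1}. if c = snd e then int c * int x else 0)"
    unfolding excess_def sum_subtractf[symmetric] by (rule sum.cong) (auto simp: algebra_simps)
  also have "\<dots> = int (fst e) * (int x + 1) - int (snd e) * int x"
    using f s by simp
  finally show ?thesis by (simp add: algebra_simps)
qed

text \<open>Weighting the vertex \<open>c\<close> by \<open>c\<close> makes every unit of flow cost at least one, because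
  edges go upwards; this bounds all flows.\<close>
lemma shifted_flows_bound:
  assumes J: "finite J" and V: "\<And>j. j \<in> J \<Longrightarrow> proper_edge n (E j)" and x: "x \<in> shifted_flows n J E t"
  shows "int (\<Sum>j\<in>J. x j) \<le> (\<Sum>j\<in>J. int (fst (E j))) - (\<Sum>c\<in>{1..n+1}. int c * t c)"
proof -
  have eq: "\<And>c. c \<in> {1..n+1} \<Longrightarrow> (\<Sum>j\<in>J. excess (E j) (x j) c) = t c" using x unfolding shifted_flows_def by auto
  have "(\<Sum>c\<in>{1..n+1}. int c * t c) = (\<Sum>c\<in>{1..n+1}. int c * (\<Sum>j\<in>J. excess (E j) (x j) c))"
    using eq by simp
  also have "\<dots> = (\<Sum>j\<in>J. \<Sum>c\<in>{1..n+1}. int c * excess (E j) (x j) c)"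
    by (simp add: sum_distrib_left sum.swap[of _ J])
  also have "\<dots> = (\<Sum>j\<in>J. int (fst (E j)) - int (x j) * (int (snd (E j)) - int (fst (E j))))"
    using V weighted_sum_excess by (intro sum.cong) auto
  also have "\<dots> \<le> (\<Sum>j\<in>J. int (fst (E j)) - int (x j))"
  proof (rule sum_mono)
    fix j assume "j \<in> J"
    then have "int (snd (E j)) - int (fst (E j)) \<ge> 1" using V unfolding proper_edge_def by force
    then have "int (x j) * (int (snd (E j)) - int (fst (E j))) \<ge> int (x j)"
      by (metis mult.right_neutral mult_left_mono of_nat_0_le_iff)
    then show "int (fst (E j)) - int (x j) * (int (snd (E j)) - int (fst (E j))) \<le> int (fst (E j)) - int (x j)"
      by simp
  qed
  also have "\<dots> = (\<Sum>j\<in>J. int (fst (E j))) - int (\<Sum>j\<in>J. x j)"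
    by (simp add: sum_subtractf)
  finally show ?thesis by simp
qed

lemma finite_shifted_flows:
  assumes J: "finite J" and V: "\<And>j. j \<in> J \<Longrightarrow> proper_edge n (E j)"
  shows "finite (shifted_flows n J E t)"
proof -
  define C where "C = nat ((\<Sum>j\<in>J. int (fst (E j))) - (\<Sum>c\<in>{1..n+1}. int c * t c))"
  have "shifted_flows n J E t \<subseteq> {x. \<forall>j. (j \<in> J \<longrightarrow> x j \<in> {..C}) \<and> (j \<notin> J \<longrightarrow> x j = 0)}"
  proof (intro subsetI CollectI allI conjI impI)
    fix x j assume x: "x \<in> shifted_flows n J E t"
    show "j \<notin> J \<Longrightarrow> x j = 0" using x unfolding shifted_flows_def by auto
    assume j: "j \<in> J"
    have "x j \<le> (\<Sum>j\<in>J. x j)" using J j by (intro member_le_sum) auto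
    then have "int (x j) \<le> (\<Sum>j\<in>J. int (fst (E j))) - (\<Sum>c\<in>{1..n+1}. int c * t c)"
      using shifted_flows_bound[OF J V x] by linarith
    then show "x j \<in> {..C}" unfolding C_def by (simp add: le_nat_iff)
  qed
  moreover have "finite {x. \<forall>j. (j \<in> J \<longrightarrow> x j \<in> {..C}) \<and> (j \<notin> J \<longrightarrow> x j = 0)}"
    by (rule finite_set_of_finite_funs[OF J]) simp
  ultimately show ?thesis by (rule finite_subset)
qed

lemma reindex_in_shifted_flows:
  assumes b: "bij_betw \<sigma> J' J" and e: "\<And>j. j \<in> J' \<Longrightarrow> E (\<sigma> j) = E' j"
    and x: "x \<in> shifted_flows n J E t"
  shows "(\<lambda>j. if j \<in> J' then x (\<sigma> j) else 0) \<in> shifted_flows n J' E' t"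
proof -
  have "(\<Sum>j\<in>J'. excess (E' j) (if j \<in> J' then x (\<sigma> j) else 0) c) = (\<Sum>j\<in>J. excess (E j) (x j) c)"
    for c
  proof -
    have "(\<Sum>j\<in>J'. excess (E' j) (if j \<in> J' then x (\<sigma> j) else 0) c)
        = (\<Sum>j\<in>J'. excess (E (\<sigma> j)) (x (\<sigma> j)) c)"
      using e by (intro sum.cong) auto
    also have "\<dots> = (\<Sum>j\<in>J. excess (E j) (x j) c)" by (rule sum.reindex_bij_betw[OF b])
    finally show ?thesis .
  qed
  then show ?thesis using x unfolding shifted_flows_def by auto
qed

lemma card_shifted_flows_reindex:
  assumes b: "bij_betw \<sigma> J' J" and e: "\<And>j. j \<in> J' \<Longrightarrow> E (\<sigma> j) = E' j"
  shows "card (shifted_flows n J E t) = card (shifted_flows n J' E' t)"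
proof -
  define \<tau> where "\<tau> = inv_into J' \<sigma>"
  have b': "bij_betw \<tau> J J'" unfolding \<tau>_def using b by (rule bij_betw_inv_into)
  have \<sigma>\<tau>: "\<sigma> (\<tau> j) = j" if "j \<in> J" for j
    unfolding \<tau>_def using b that by (simp add: bij_betw_inv_into_right)
  have \<tau>\<sigma>: "\<tau> (\<sigma> j) = j" if "j \<in> J'" for j
    unfolding \<tau>_def using b that by (simp add: bij_betw_inv_into_left)
  have e': "E' (\<tau> j) = E j" if "j \<in> J" for j
    using e[of "\<tau> j"] \<sigma>\<tau>[OF that] bij_betw_apply[OF b' that] by simp
  define M where "M = (\<lambda>x j. if j \<in> J' then x (\<sigma> j) else (0::nat))"
  define N where "N = (\<lambda>y j. if j \<in> J then y (\<tau> j) else (0::nat))"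
  have "bij_betw M (shifted_flows n J E t) (shifted_flows n J' E' t)"
  proof (rule bij_betw_byWitness[where f' = N])
    show "\<forall>x\<in>shifted_flows n J E t. N (M x) = x"
      using \<sigma>\<tau> bij_betw_apply[OF b'] by (auto simp: shifted_flows_def M_def N_def fun_eq_iff)
    show "\<forall>y\<in>shifted_flows n J' E' t. M (N y) = y"
      using \<tau>\<sigma> bij_betw_apply[OF b] by (auto simp: shifted_flows_def M_def N_def fun_eq_iff)
    show "M ` shifted_flows n J E t \<subseteq> shifted_flows n J' E' t"
      unfolding M_def using reindex_in_shifted_flows[of \<sigma> J' J E E'] b e by blast
    show "N ` shifted_flows n J' E' t \<subseteq> shifted_flows n J E t"
      unfolding N_def using reindex_in_shifted_flows[of \<tau> J J' E' E] b' e' by blast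
  qed
  then show ?thesis by (rule bij_betw_same_card)
qed

lemma bij_betw_of_image_mset_eq:
  "finite J' \<Longrightarrow> finite J \<Longrightarrow> image_mset E (mset_set J) = image_mset E' (mset_set J')
    \<Longrightarrow> \<exists>\<sigma>. bij_betw \<sigma> J' J \<and> (\<forall>j\<in>J'. E (\<sigma> j) = E' j)"
proof (induction J' arbitrary: J rule: finite_induct)
  case empty
  then have "J = {}" by (metis image_mset_is_empty_iff mset_set_empty_iff)
  then show ?case by (auto simp: bij_betw_def)
next
  case (insert a J0)
  have "E' a \<in># image_mset E (mset_set J)" using insert by simp
  then obtain b where b0: "b \<in># mset_set J" "E b = E' a" by auto
  then have b: "b \<in> J" "E b = E' a" using insert(4) by auto
  have "image_mset E (mset_set J) = add_mset (E b) (image_mset E (mset_set (J - {b})))"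
    using b insert(4) by (simp add: mset_set.remove)
  moreover have "image_mset E' (mset_set (insert a J0)) = add_mset (E' a) (image_mset E' (mset_set J0))"
    using insert by simp
  ultimately have "image_mset E (mset_set (J - {b})) = image_mset E' (mset_set J0)"
    using insert(5) b by simp
  then obtain \<sigma>0 where s0: "bij_betw \<sigma>0 J0 (J - {b})" "\<forall>j\<in>J0. E (\<sigma>0 j) = E' j"
    using insert(3)[of "J - {b}"] insert(4) by auto
  define \<sigma> where "\<sigma> = \<sigma>0(a := b)"
  have "bij_betw \<sigma> J0 (J - {b})" using s0(1) insert(2) unfolding \<sigma>_def
    by (metis bij_betw_cong fun_upd_other)
  then have "bij_betw \<sigma> (J0 \<union> {a}) ((J - {b}) \<union> {\<sigma> a})"
    using notIn_Un_bij_betw3[of a J0 \<sigma> "J - {b}"] insert(2) unfolding \<sigma>_def by simp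
  moreover have "(J - {b}) \<union> {\<sigma> a} = J" "J0 \<union> {a} = insert a J0" using b unfolding \<sigma>_def by auto
  ultimately have "bij_betw \<sigma> (insert a J0) J" by simp
  moreover have "\<forall>j\<in>insert a J0. E (\<sigma> j) = E' j"
    using s0(2) b insert(2) unfolding \<sigma>_def by auto
  ultimately show ?case by blast
qed

lemma card_shifted_flows_image_mset:
  assumes "finite J" "finite J'" "image_mset E (mset_set J) = image_mset E' (mset_set J')"
  shows "card (shifted_flows n J E t) = card (shifted_flows n J' E' t)"
  using bij_betw_of_image_mset_eq[OF assms(2,1,3)] card_shifted_flows_reindex by blast

definition flow_count :: "nat \<Rightarrow> (nat \<Rightarrow> int) \<Rightarrow> graph \<Rightarrow> nat" where
  "flow_count n t H = card (shifted_flows n {..<size H} (\<lambda>j. sorted_list_of_multiset H ! j) t)"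

lemma image_mset_nth_mset_set: "image_mset (\<lambda>j. xs ! j) (mset_set {..<length xs}) = mset xs"
proof -
  have "mset xs = mset (map (\<lambda>j. xs ! j) [0..<length xs])" by (simp add: map_nth)
  then show ?thesis by (simp add: atLeast0LessThan)
qed

lemma flow_count_eq_card:
  assumes "finite J" "image_mset E (mset_set J) = H"
  shows "flow_count n t H = card (shifted_flows n J E t)"
proof -
  have "length (sorted_list_of_multiset H) = size H"
    by (metis mset_sorted_list_of_multiset size_mset)
  then have "image_mset (\<lambda>j. sorted_list_of_multiset H ! j) (mset_set {..<size H}) = H"
    using image_mset_nth_mset_set[of "sorted_list_of_multiset H"] by simp
  then show ?thesis unfolding flow_count_def using assms
    by (intro card_shifted_flows_image_mset) auto
qed

definition demand :: "nat \<Rightarrow> (nat \<Rightarrow> nat) \<Rightarrow> nat \<Rightarrow> int" where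
  "demand n m = (\<lambda>k. if k \<in> {1..n} then int (m k) else 0)"

lemma sum_excess_eq_netflow:
  fixes H :: graph
  defines "es \<equiv> sorted_list_of_multiset H"
  shows "(\<Sum>j<size H. excess (es ! j) (f j) c) = netflow H f c + int (outd H c)"
proof -
  have len: "length es = size H" unfolding es_def by (metis mset_sorted_list_of_multiset size_mset)
  have A: "{j. j < length es \<and> fst (es ! j) = c} = {j\<in>{..<size H}. fst (es ! j) = c}" using len by auto
  have B: "{j. j < length es \<and> snd (es ! j) = c} = {j\<in>{..<size H}. snd (es ! j) = c}" using len by auto
  have co: "card {j\<in>{..<size H}. fst (es ! j) = c} = outd H c"
  proof -
    have "outd H c = size (filter_mset (\<lambda>e. fst e = c) (mset es))"
      unfolding outd_def es_def by simp
    also have "\<dots> = length (filter (\<lambda>e. fst e = c) es)" by (metis mset_filter size_mset)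
    also have "\<dots> = card {j. j < length es \<and> fst (es ! j) = c}" by (rule length_filter_conv_card)
    finally show ?thesis using A by simp
  qed
  have "(\<Sum>j<size H. excess (es ! j) (f j) c)
      = (\<Sum>j<size H. if fst (es ! j) = c then int (f j) + 1 else 0)
        - (\<Sum>j<size H. if snd (es ! j) = c then int (f j) else 0)"
    unfolding excess_def by (simp add: sum_subtractf)
  also have "\<dots> = (\<Sum>j\<in>{j\<in>{..<size H}. fst (es ! j) = c}. int (f j) + 1)
        - (\<Sum>j\<in>{j\<in>{..<size H}. snd (es ! j) = c}. int (f j))"
  proof -
    have s1: "(\<Sum>j\<in>{j\<in>{..<size H}. fst (es ! j) = c}. int (f j) + 1)
       = (\<Sum>j<size H. if fst (es ! j) = c then int (f j) + 1 else 0)"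
      by (rule sum.inter_filter) simp
    have s2: "(\<Sum>j\<in>{j\<in>{..<size H}. snd (es ! j) = c}. int (f j))
       = (\<Sum>j<size H. if snd (es ! j) = c then int (f j) else 0)"
      by (rule sum.inter_filter) simp
    show ?thesis by (simp only: s1 s2)
  qed
  also have "\<dots> = netflow H f c + int (outd H c)"
    unfolding netflow_def Let_def es_def[symmetric] A B using co by (simp add: sum.distrib)
  finally show ?thesis .
qed

lemma outd_eq_0: "(\<And>e. e \<in># H \<Longrightarrow> fst e \<noteq> c) \<Longrightarrow> outd H c = 0"
  unfolding outd_def by auto

lemma K_eq_flow_count:
  assumes V: "\<forall>e\<in>#H. proper_edge n e"
  shows "K n H (\<lambda>k. if k \<in> {1..n} then int (m k) - int (outd H k) else 0) = flow_count n (demand n m) H"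
proof -
  have o: "outd H (n + 1) = 0" using V by (intro outd_eq_0) (auto simp: proper_edge_def)
  show ?thesis unfolding K_def flow_count_def shifted_flows_def
  proof (rule arg_cong[where f=card], rule Collect_cong, rule conj_cong)
    fix f :: "nat \<Rightarrow> nat"
    show "(\<forall>j\<ge>size H. f j = 0) = (\<forall>j. j \<notin> {..<size H} \<longrightarrow> f j = 0)" by auto
    show "(\<forall>k\<in>{1..n + 1}. netflow H f k = (if k \<in> {1..n} then int (m k) - int (outd H k) else 0)) =
      (\<forall>c\<in>{1..n + 1}. (\<Sum>j\<in>{..<size H}. excess (sorted_list_of_multiset H ! j) (f j) c) = demand n m c)"
      unfolding sum_excess_eq_netflow demand_def using o
      by (intro ball_cong) (auto simp: le_Suc_eq)
  qed
qed

section \<open>One compounded reduction\<close>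

lemma sum_excess_tree_edges:
  assumes "T \<subseteq> {..<l} \<times> {..<k}"
  shows "(\<Sum>s\<in>T. excess (src (fst s), dst (snd s)) (\<phi> s) c)
     = (\<Sum>p<l. if src p = c then int (row_load k T \<phi> p) else 0)
       - (\<Sum>q<k. if dst q = c then int (col_load l T \<phi> q) else 0)"
proof -
  have "(\<Sum>s\<in>T. excess (src (fst s), dst (snd s)) (\<phi> s) c)
      = (\<Sum>p<l. \<Sum>q<k. if (p, q) \<in> T then excess (src p, dst q) (\<phi> (p, q)) c else 0)"
    using sum_over_box[OF assms, of "\<lambda>(p, q). excess (src p, dst q) (\<phi> (p, q)) c", symmetric]
    by (simp only: prod.case split_beta fst_conv snd_conv prod.collapse)
  also have "\<dots> = (\<Sum>p<l. \<Sum>q<k. if (p, q) \<in> T then (if src p = c then int (\<phi> (p, q)) + 1 else 0) else 0)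
      - (\<Sum>p<l. \<Sum>q<k. if (p, q) \<in> T then (if dst q = c then int (\<phi> (p, q)) else 0) else 0)"
    unfolding excess_def sum_subtractf[symmetric] by (intro sum.cong) auto
  also have "(\<Sum>p<l. \<Sum>q<k. if (p, q) \<in> T then (if src p = c then int (\<phi> (p, q)) + 1 else 0) else 0)
      = (\<Sum>p<l. if src p = c then int (row_load k T \<phi> p) else 0)"
    unfolding row_load_def of_nat_sum by (intro sum.cong) (auto intro!: sum.cong sum.neutral)
  also have "(\<Sum>p<l. \<Sum>q<k. if (p, q) \<in> T then (if dst q = c then int (\<phi> (p, q)) else 0) else 0)
      = (\<Sum>q<k. if dst q = c then int (col_load l T \<phi> q) else 0)"
    unfolding col_load_def of_nat_sum by (subst sum.swap) (intro sum.cong, auto intro!: sum.cong sum.neutral)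
  finally show ?thesis .
qed

text \<open>Replacing the edges into and out of a vertex \<open>v\<close> by the tree edges of a staircase changes
  the excess only at \<open>v\<close>, by one: the tree has one edge fewer than there were edges at \<open>v\<close>.\<close>
lemma staircase_excess_balance:
  assumes T: "staircase l k T" and k: "1 \<le> k"
  shows "(\<Sum>p<l. excess (src p, v) (row_load k T \<phi> p - 1) c) + (\<Sum>q<k. excess (v, dst q) (col_load l T \<phi> q) c)
       = (\<Sum>s\<in>T. excess (src (fst s), dst (snd s)) (\<phi> s) c) + (if c = v then 1 else 0)"
proof -
  define R where "R = (\<Sum>p<l. int (row_load k T \<phi> p))"
  define C where "C = (\<Sum>q<k. int (col_load l T \<phi> q))"
  have pos: "1 \<le> row_load k T \<phi> p" if "p < l" for p using row_load_pos[OF T k that] .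
  have "(\<Sum>p<l. excess (src p, v) (row_load k T \<phi> p - 1) c)
      = (\<Sum>p<l. (if src p = c then int (row_load k T \<phi> p) else 0)
                - (if v = c then int (row_load k T \<phi> p) - 1 else 0))"
    using pos by (intro sum.cong) (auto simp: excess_def)
  also have "\<dots> = (\<Sum>p<l. if src p = c then int (row_load k T \<phi> p) else 0) - (if v = c then R - int l else 0)"
    unfolding R_def sum_subtractf by (simp add: sum_subtractf)
  finally have rows: "(\<Sum>p<l. excess (src p, v) (row_load k T \<phi> p - 1) c)
      = (\<Sum>p<l. if src p = c then int (row_load k T \<phi> p) else 0) - (if v = c then R - int l else 0)" .
  have cols: "(\<Sum>q<k. excess (v, dst q) (col_load l T \<phi> q) c)
      = (if v = c then C + int k else 0) - (\<Sum>q<k. if dst q = c then int (col_load l T \<phi> q) else 0)"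
    unfolding excess_def C_def sum_subtractf by (auto simp: sum.distrib)
  have "R + 1 = C + int l + int k"
    using staircase_load_balance[OF T, of \<phi>] unfolding R_def C_def by (simp flip: of_nat_sum)
  then show ?thesis
    unfolding rows cols sum_excess_tree_edges[OF conjunct1[OF T[unfolded staircase_def]]] by auto
qed

lemma Inl_mem_Plus [simp]: "Inl a \<in> A <+> B \<longleftrightarrow> a \<in> A"
  by auto

lemma Inr_mem_Plus [simp]: "Inr b \<in> A <+> B \<longleftrightarrow> b \<in> B"
  by auto

lemma mset_set_Plus:
  assumes "finite A" "finite B"
  shows "mset_set (A <+> B) = image_mset Inl (mset_set A) + image_mset Inr (mset_set B)"
proof -
  have "mset_set (A <+> B) = mset_set (Inl ` A) + mset_set (Inr ` B)"
    unfolding Plus_def using assms by (intro mset_set_Union) auto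
  then show ?thesis by (simp add: image_mset_mset_set inj_on_def)
qed

text \<open>One compounded reduction at vertex \<open>i\<close> of \<open>H\<close>: \<open>Ls\<close> and \<open>Rs\<close> list the incoming and
  outgoing edges, and \<open>pos\<close> (that is, \<open>a\<^sub>i > 0\<close>) adds the symbol \<open>v\<^sub>i\<close> as the last row of the grid.\<close>
locale vertex_split =
  fixes n :: nat and H :: graph and i :: nat and Ls Rs :: "edge list" and pos :: bool
  assumes proper: "\<forall>e\<in>#H. proper_edge n e"
    and mset_Ls: "mset Ls = filter_mset (\<lambda>e. snd e = i) H"
    and mset_Rs: "mset Rs = filter_mset (\<lambda>e. fst e = i) H"
    and vertex: "1 \<le> i" "i \<le> n"
    and Ls_ne: "Ls \<noteq> []" and Rs_ne: "Rs \<noteq> []"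
begin

abbreviation rows :: nat where "rows \<equiv> length Ls + (if pos then 1 else 0)"

definition rest :: "edge list" where
  "rest = sorted_list_of_multiset (filter_mset (\<lambda>e. snd e \<noteq> i \<and> fst e \<noteq> i) H)"

abbreviation parent_index :: "(nat + nat + nat) set" where
  "parent_index \<equiv> {..<length rest} <+> {..<length Ls} <+> {..<length Rs}"

definition src :: "nat \<Rightarrow> nat" where
  "src p = (if p < length Ls then fst (Ls ! p) else i)"

definition tree_edge :: "nat \<times> nat \<Rightarrow> edge" where
  "tree_edge = (\<lambda>(p, q). (src p, snd (Rs ! q)))"

definition child :: "(nat \<times> nat) set \<Rightarrow> graph" where
  "child T = mset rest + image_mset tree_edge (mset_set T)
     + (if pos then {#} else {#(i, n + 1)#})"

definition parent_edge :: "nat + nat + nat \<Rightarrow> edge" where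
  "parent_edge = case_sum (\<lambda>j. rest ! j) (case_sum (\<lambda>p. Ls ! p) (\<lambda>q. Rs ! q))"

definition child_index :: "(nat \<times> nat) set \<Rightarrow> (nat + (nat \<times> nat) + unit) set" where
  "child_index T = {..<length rest} <+> T <+> (if pos then {} else {()})"

definition child_edge :: "nat + (nat \<times> nat) + unit \<Rightarrow> edge" where
  "child_edge = case_sum (\<lambda>j. rest ! j) (case_sum tree_edge (\<lambda>_. (i, n + 1)))"

definition collapse :: "(nat \<times> nat) set \<Rightarrow> (nat + (nat \<times> nat) + unit \<Rightarrow> nat) \<Rightarrow> nat + nat + nat \<Rightarrow> nat"
  where "collapse T y = case_sum (\<lambda>j. y (Inl j))
     (case_sum (\<lambda>p. if p < length Ls then row_load (length Rs) T (\<lambda>s. y (Inr (Inl s))) p - 1 else 0)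
               (\<lambda>q. if q < length Rs then col_load rows T (\<lambda>s. y (Inr (Inl s))) q else 0))"

lemma nth_Ls: "p < length Ls \<Longrightarrow> proper_edge n (Ls ! p) \<and> snd (Ls ! p) = i \<and> fst (Ls ! p) \<noteq> i"
  using proper nth_mem[of p Ls] unfolding proper_edge_def
  by (auto simp flip: set_mset_mset simp: mset_Ls)

lemma nth_Rs: "q < length Rs \<Longrightarrow> proper_edge n (Rs ! q) \<and> fst (Rs ! q) = i \<and> snd (Rs ! q) \<noteq> i"
  using proper nth_mem[of q Rs] unfolding proper_edge_def
  by (auto simp flip: set_mset_mset simp: mset_Rs)

lemma nth_rest: "j < length rest \<Longrightarrow> proper_edge n (rest ! j) \<and> fst (rest ! j) \<noteq> i \<and> snd (rest ! j) \<noteq> i"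
proof -
  assume "j < length rest"
  then have "rest ! j \<in># mset rest" by simp
  then show ?thesis using proper unfolding rest_def by auto
qed

lemma H_split: "H = mset rest + mset Ls + mset Rs"
  unfolding multiset_eq_iff
proof
  fix e
  have "\<not> (snd e = i \<and> fst e = i)" if "e \<in># H"
    using proper that unfolding proper_edge_def by force
  then show "count H e = count (mset rest + mset Ls + mset Rs) e"
    unfolding rest_def mset_Ls mset_Rs by (cases "e \<in># H") (auto simp: not_in_iff)
qed

lemma image_mset_parent_edge: "image_mset parent_edge (mset_set parent_index) = H"
proof -
  have "image_mset parent_edge (mset_set parent_index)
    = image_mset (\<lambda>j. rest ! j) (mset_set {..<length rest})
      + image_mset (\<lambda>p. Ls ! p) (mset_set {..<length Ls})
      + image_mset (\<lambda>q. Rs ! q) (mset_set {..<length Rs})"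
    unfolding parent_edge_def by (simp add: mset_set_Plus multiset.map_comp comp_def add.assoc)
  then show ?thesis unfolding image_mset_nth_mset_set H_split[symmetric] .
qed

lemma image_mset_child_edge:
  assumes "finite T"
  shows "image_mset child_edge (mset_set (child_index T)) = child T"
proof -
  have "image_mset child_edge (mset_set (child_index T))
    = image_mset (\<lambda>j. rest ! j) (mset_set {..<length rest})
      + image_mset tree_edge (mset_set T)
      + image_mset (\<lambda>_. (i, n + 1)) (mset_set (if pos then {} else {()}))"
    unfolding child_edge_def child_index_def using assms
    by (simp add: mset_set_Plus multiset.map_comp comp_def add.assoc)
  then show ?thesis unfolding image_mset_nth_mset_set child_def by simp
qed

lemma sum_parent_index:
  "(\<Sum>z\<in>parent_index. f z) = (\<Sum>j<length rest. f (Inl j)) + (\<Sum>p<length Ls. f (Inr (Inl p)))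
     + (\<Sum>q<length Rs. f (Inr (Inr q)))"
  by (simp add: sum.Plus add.assoc)

lemma sum_child_index:
  "finite T \<Longrightarrow> (\<Sum>z\<in>child_index T. f z) = (\<Sum>j<length rest. f (Inl j)) + (\<Sum>s\<in>T. f (Inr (Inl s)))
     + (if pos then 0 else f (Inr (Inr ())))"
  unfolding child_index_def by (simp add: sum.Plus add.assoc)

lemma excess_balance_at_vertex:
  assumes T: "staircase rows (length Rs) T"
  shows "(\<Sum>p<length Ls. excess (Ls ! p) (row_load (length Rs) T \<phi> p - 1) c)
       + (\<Sum>q<length Rs. excess (Rs ! q) (col_load rows T \<phi> q) c)
     = (\<Sum>s\<in>T. excess (tree_edge s) (\<phi> s) c) + (if c = i \<and> \<not> pos then 1 else 0)"
proof -
  have Ls: "Ls ! p = (src p, i)" if "p < length Ls" for p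
    using nth_Ls[OF that] that unfolding src_def by (simp add: prod_eq_iff)
  have Rs: "Rs ! q = (i, snd (Rs ! q))" if "q < length Rs" for q
    using nth_Rs[OF that] by (simp add: prod_eq_iff)
  have "(\<Sum>p<rows. excess (src p, i) (row_load (length Rs) T \<phi> p - 1) c)
     = (\<Sum>p<length Ls. excess (Ls ! p) (row_load (length Rs) T \<phi> p - 1) c)
       + (if pos \<and> c = i then 1 else 0)"
  proof -
    have split: "(\<Sum>p<rows. g p) = (\<Sum>p<length Ls. g p) + (if pos then g (length Ls) else 0)"
      for g :: "nat \<Rightarrow> int" by simp
    have "(\<Sum>p<length Ls. excess (src p, i) (row_load (length Rs) T \<phi> p - 1) c)
       = (\<Sum>p<length Ls. excess (Ls ! p) (row_load (length Rs) T \<phi> p - 1) c)"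
      using Ls by (intro sum.cong) auto
    moreover have "excess (src (length Ls), i) x d = (if d = i then 1 else 0)" for x d
      by (simp add: src_def excess_def)
    ultimately show ?thesis unfolding split by simp
  qed
  moreover have "(\<Sum>q<length Rs. excess (i, snd (Rs ! q)) (col_load rows T \<phi> q) c)
     = (\<Sum>q<length Rs. excess (Rs ! q) (col_load rows T \<phi> q) c)"
    using Rs by (intro sum.cong) auto
  moreover have "1 \<le> length Rs" using Rs_ne by (simp add: Suc_le_eq)
  then have "(\<Sum>p<rows. excess (src p, i) (row_load (length Rs) T \<phi> p - 1) c)
      + (\<Sum>q<length Rs. excess (i, snd (Rs ! q)) (col_load rows T \<phi> q) c)
    = (\<Sum>s\<in>T. excess (tree_edge s) (\<phi> s) c) + (if c = i then 1 else 0)"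
    using staircase_excess_balance[OF T, where src = src and v = i and dst = "\<lambda>q. snd (Rs ! q)"]
    unfolding tree_edge_def by (simp add: case_prod_beta)
  ultimately show ?thesis by (cases pos; cases "c = i") simp_all
qed

lemma tree_excess_at_vertex:
  assumes T: "staircase rows (length Rs) T"
  shows "(\<Sum>s\<in>T. excess (tree_edge s) (\<phi> s) i) = (if pos then int (row_load (length Rs) T \<phi> (length Ls)) else 0)"
proof -
  have "(\<Sum>s\<in>T. excess (tree_edge s) (\<phi> s) i)
      = (\<Sum>p<rows. if src p = i then int (row_load (length Rs) T \<phi> p) else 0)
        - (\<Sum>q<length Rs. if snd (Rs ! q) = i then int (col_load rows T \<phi> q) else 0)"
    using sum_excess_tree_edges[of T rows "length Rs", where src = src and dst = "\<lambda>q. snd (Rs ! q)"] T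
    unfolding staircase_def tree_edge_def by (simp add: case_prod_beta)
  also have "\<dots> = (if pos then int (row_load (length Rs) T \<phi> (length Ls)) else 0)"
    using nth_Ls nth_Rs by (simp add: src_def sum.neutral)
  finally show ?thesis .
qed

lemma excess_at_vertex_rest: "j < length rest \<Longrightarrow> excess (rest ! j) x i = 0"
  using nth_rest by (simp add: excess_def)

lemma collapse_Inl [simp]: "collapse T y (Inl j) = y (Inl j)"
  unfolding collapse_def by simp

lemma sum_excess_collapse:
  assumes T: "staircase rows (length Rs) T"
  shows "(\<Sum>z\<in>parent_index. excess (parent_edge z) (collapse T y z) c)
    = (\<Sum>z\<in>child_index T. excess (child_edge z) (y z) c) + (if c = i \<and> \<not> pos then 1 else 0)
      - (if pos then 0 else excess (i, n + 1) (y (Inr (Inr ()))) c)"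
proof -
  have fin: "finite T" using staircase_finite[OF T] .
  have "(\<Sum>p<length Ls. excess (Ls ! p) (collapse T y (Inr (Inl p))) c)
      + (\<Sum>q<length Rs. excess (Rs ! q) (collapse T y (Inr (Inr q))) c)
    = (\<Sum>s\<in>T. excess (tree_edge s) (y (Inr (Inl s))) c) + (if c = i \<and> \<not> pos then 1 else 0)"
    unfolding collapse_def using excess_balance_at_vertex[OF T] by simp
  then show ?thesis
    unfolding sum_parent_index sum_child_index[OF fin] by (simp add: parent_edge_def child_edge_def)
qed

lemma proper_child_edge:
  assumes T: "staircase rows (length Rs) T" and z: "z \<in> child_index T"
  shows "proper_edge n (child_edge z)"
proof (cases z)
  case (Inl j)
  then show ?thesis using z nth_rest unfolding child_index_def child_edge_def by simp
next
  case (Inr z')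
  show ?thesis
  proof (cases z')
    case (Inl s)
    obtain p q where s: "s = (p, q)" by fastforce
    have "p < rows" "q < length Rs" using T z Inr Inl s unfolding staircase_def child_index_def by auto
    then show ?thesis
      using nth_Ls[of p] nth_Rs[of q] vertex Inr Inl s
      unfolding child_edge_def tree_edge_def src_def proper_edge_def by auto
  next
    case (Inr u)
    then show ?thesis using vertex \<open>z = Inr z'\<close> unfolding child_edge_def proper_edge_def by simp
  qed
qed

lemma reduce_child_eq_child:
  assumes "pos = (0 < a i)"
  shows "reduce_child n a Ls Rs H i T = child T"
proof -
  have "H - mset Ls - mset Rs = mset rest" by (subst H_split) simp
  moreover have "(\<lambda>(p, q). if p < length Ls then (fst (Ls ! p), snd (Rs ! q)) else (i, snd (Rs ! q)))
      = tree_edge"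
    by (auto simp: tree_edge_def src_def fun_eq_iff)
  ultimately show ?thesis using assms unfolding reduce_child_def child_def by simp
qed

lemma reduce_children_eq:
  assumes "pos = (0 < a i)" "ordI H i = Ls" "ordO H i = Rs"
  shows "reduce_children n a ordI ordO i H = image_mset child (mset_set (Collect (staircase rows (length Rs))))"
proof -
  have "nc_trees rows (length Rs) = Collect (staircase rows (length Rs))"
    by (rule nc_trees_eq) (use Ls_ne Rs_ne in \<open>simp_all add: Suc_le_eq\<close>)
  moreover have "reduce_child n a Ls Rs H i = child"
    by (rule ext) (rule reduce_child_eq_child[where a = a, OF assms(1)])
  ultimately show ?thesis using assms unfolding reduce_children_def Let_def by simp
qed

end

locale vertex_reduction = vertex_split +
  fixes t :: "nat \<Rightarrow> int"
  assumes demand_at_vertex: "1 \<le> t i" "\<not> pos \<Longrightarrow> t i = 1"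
begin

lemma child_flow_at_vertex:
  assumes T: "staircase rows (length Rs) T" and y: "y \<in> shifted_flows n (child_index T) child_edge t"
  shows "\<not> pos \<Longrightarrow> y (Inr (Inr ())) = 0"
    and "pos \<Longrightarrow> int (row_load (length Rs) T (\<lambda>s. y (Inr (Inl s))) (length Ls)) = t i"
proof -
  have "(\<Sum>z\<in>child_index T. excess (child_edge z) (y z) i) = t i"
    using y vertex unfolding shifted_flows_def by auto
  then have "(if pos then int (row_load (length Rs) T (\<lambda>s. y (Inr (Inl s))) (length Ls)) else 0)
      + (if pos then 0 else int (y (Inr (Inr ()))) + 1) = t i"
    using vertex unfolding sum_child_index[OF staircase_finite[OF T]]
    by (simp add: child_edge_def excess_at_vertex_rest tree_excess_at_vertex[OF T])
      (auto simp: child_edge_def excess_def)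
  then show "\<not> pos \<Longrightarrow> y (Inr (Inr ())) = 0" and
    "pos \<Longrightarrow> int (row_load (length Rs) T (\<lambda>s. y (Inr (Inl s))) (length Ls)) = t i"
    using demand_at_vertex by simp_all
qed

lemma collapse_in_shifted_flows:
  assumes T: "staircase rows (length Rs) T" and y: "y \<in> shifted_flows n (child_index T) child_edge t"
  shows "collapse T y \<in> shifted_flows n parent_index parent_edge t"
proof -
  have supp: "y z = 0" if "z \<notin> child_index T" for z using y that unfolding shifted_flows_def by auto
  have "collapse T y z = 0" if "z \<notin> parent_index" for z
  proof (cases z)
    case (Inl j)
    then show ?thesis using that supp[of "Inl j"] unfolding child_index_def by simp
  next
    case (Inr z')
    then show ?thesis using that unfolding collapse_def by (cases z') auto
  qed
  moreover have "(\<Sum>z\<in>parent_index. excess (parent_edge z) (collapse T y z) c) = t c"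
    if "c \<in> {1..n + 1}" for c
    using y that child_flow_at_vertex(1)[OF T y] vertex
    unfolding sum_excess_collapse[OF T] shifted_flows_def by (auto simp: excess_def)
  ultimately show ?thesis unfolding shifted_flows_def by auto
qed

text \<open>The row of \<open>v\<^sub>i\<close> has no edge of \<open>H\<close> behind it; its load is dictated by the demand at \<open>i\<close>.\<close>
definition incoming :: "(nat + nat + nat \<Rightarrow> nat) \<Rightarrow> nat \<Rightarrow> nat" where
  "incoming x p = (if p < length Ls then x (Inr (Inl p)) else nat (t i) - 1)"

definition outgoing :: "(nat + nat + nat \<Rightarrow> nat) \<Rightarrow> nat \<Rightarrow> nat" where
  "outgoing x q = x (Inr (Inr q))"

lemma tree_split_child_flow:
  assumes T: "staircase rows (length Rs) T" and y: "y \<in> shifted_flows n (child_index T) child_edge t"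
  shows "tree_split rows (length Rs) (incoming (collapse T y)) (outgoing (collapse T y)) T
           (\<lambda>s. y (Inr (Inl s)))"
  unfolding tree_split_def
proof (intro conjI allI impI)
  show "staircase rows (length Rs) T" by (rule T)
  show "y (Inr (Inl s)) = 0" if "s \<notin> T" for s
    using y that unfolding shifted_flows_def child_index_def by simp
  show "row_load (length Rs) T (\<lambda>s. y (Inr (Inl s))) p = incoming (collapse T y) p + 1" if "p < rows" for p
  proof (cases "p < length Ls")
    case True
    have "1 \<le> row_load (length Rs) T (\<lambda>s. y (Inr (Inl s))) p"
      using row_load_pos[OF T] Rs_ne that by (simp add: Suc_le_eq)
    then show ?thesis using True unfolding incoming_def collapse_def by simp
  next
    case False
    then have "pos" "p = length Ls" using that by (auto split: if_splits)
    then show ?thesis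
      using child_flow_at_vertex(2)[OF T y] demand_at_vertex(1) unfolding incoming_def by simp
  qed
  show "col_load rows T (\<lambda>s. y (Inr (Inl s))) q = outgoing (collapse T y) q" if "q < length Rs" for q
    using that unfolding outgoing_def collapse_def by simp
qed

lemma inj_on_collapse:
  "inj_on (\<lambda>(T, y). collapse T y)
     (SIGMA T:Collect (staircase rows (length Rs)). shifted_flows n (child_index T) child_edge t)"
proof (rule inj_onI, clarsimp)
  fix T T' y y'
  assume T: "staircase rows (length Rs) T" and y: "y \<in> shifted_flows n (child_index T) child_edge t"
    and T': "staircase rows (length Rs) T'" and y': "y' \<in> shifted_flows n (child_index T') child_edge t"
    and eq: "collapse T y = collapse T' y'"
  have "T' = T \<and> (\<lambda>s. y' (Inr (Inl s))) = (\<lambda>s. y (Inr (Inl s)))"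
    using tree_split_unique[OF tree_split_child_flow[OF T y]] tree_split_child_flow[OF T' y'] eq Ls_ne Rs_ne
    by (simp add: Suc_le_eq)
  moreover have "y z = y' z" if "T' = T" and "(\<lambda>s. y' (Inr (Inl s))) = (\<lambda>s. y (Inr (Inl s)))" for z
  proof (cases z)
    case (Inl j)
    then show ?thesis using fun_cong[OF eq, of "Inl j"] by simp
  next
    case (Inr z')
    show ?thesis
    proof (cases z')
      case (Inl s)
      then show ?thesis using Inr fun_cong[OF that(2), of s] by simp
    next
      case (Inr u)
      then show ?thesis
        using \<open>z = Inr z'\<close> that child_flow_at_vertex(1)[OF T y] child_flow_at_vertex(1)[OF T' y'] y y'
        unfolding shifted_flows_def child_index_def by (cases pos) auto
    qed
  qed
  ultimately show "T = T' \<and> y = y'" by auto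
qed

lemma sum_incoming_outgoing:
  assumes x: "x \<in> shifted_flows n parent_index parent_edge t"
  shows "(\<Sum>p<rows. incoming x p) + 1 = (\<Sum>q<length Rs. outgoing x q) + length Rs"
proof -
  have "(\<Sum>z\<in>parent_index. excess (parent_edge z) (x z) i) = t i"
    using x vertex unfolding shifted_flows_def by auto
  moreover have "(\<Sum>p<length Ls. excess (Ls ! p) (x (Inr (Inl p))) i) = - (\<Sum>p<length Ls. int (incoming x p))"
    using nth_Ls unfolding incoming_def sum_negf[symmetric] by (intro sum.cong) (auto simp: excess_def)
  moreover have "(\<Sum>q<length Rs. excess (Rs ! q) (x (Inr (Inr q))) i)
      = (\<Sum>q<length Rs. int (outgoing x q)) + int (length Rs)"
    using nth_Rs unfolding outgoing_def by (simp add: excess_def sum.distrib)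
  ultimately have "(\<Sum>q<length Rs. int (outgoing x q)) + int (length Rs) - (\<Sum>p<length Ls. int (incoming x p)) = t i"
    unfolding sum_parent_index by (simp add: parent_edge_def excess_at_vertex_rest)
  moreover have "(\<Sum>p<rows. int (incoming x p))
      = (\<Sum>p<length Ls. int (incoming x p)) + (if pos then t i - 1 else 0)"
    using demand_at_vertex unfolding incoming_def by simp
  ultimately have "int ((\<Sum>p<rows. incoming x p) + 1) = int ((\<Sum>q<length Rs. outgoing x q) + length Rs)"
    using demand_at_vertex by (cases pos) simp_all
  then show ?thesis by (simp only: of_nat_eq_iff)
qed

lemma collapse_surj:
  assumes x: "x \<in> shifted_flows n parent_index parent_edge t"
  obtains T y where "staircase rows (length Rs) T" "y \<in> shifted_flows n (child_index T) child_edge t"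
    "collapse T y = x"
proof -
  have supp: "x z = 0" if "z \<notin> parent_index" for z using x that unfolding shifted_flows_def by auto
  have "1 \<le> rows" "1 \<le> length Rs" using Ls_ne Rs_ne by (simp_all add: Suc_le_eq)
  then obtain T \<phi> where S: "tree_split rows (length Rs) (incoming x) (outgoing x) T \<phi>"
    using tree_split_exists sum_incoming_outgoing[OF x] by blast
  then have T: "staircase rows (length Rs) T" unfolding tree_split_def by blast
  define y :: "nat + (nat \<times> nat) + unit \<Rightarrow> nat" where "y = case_sum (\<lambda>j. x (Inl j)) (case_sum \<phi> (\<lambda>_. 0))"
  have "collapse T y z = x z" for z
  proof (cases z)
    case (Inl j)
    then show ?thesis unfolding y_def by simp
  next
    case (Inr z')
    have "\<phi> = (\<lambda>s. y (Inr (Inl s)))" unfolding y_def by simp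
    then show ?thesis
      using S supp[of z] Inr unfolding tree_split_def collapse_def incoming_def outgoing_def
      by (cases z') auto
  qed
  then have collapse: "collapse T y = x" ..
  have "y z = 0" if "z \<notin> child_index T" for z
  proof (cases z)
    case (Inl j)
    then show ?thesis using that supp[of "Inl j"] unfolding y_def child_index_def by simp
  next
    case (Inr z')
    then show ?thesis using that S unfolding y_def child_index_def tree_split_def by (cases z') auto
  qed
  moreover have "(\<Sum>z\<in>child_index T. excess (child_edge z) (y z) c) = t c" if "c \<in> {1..n + 1}" for c
  proof -
    have "excess (i, n + 1) (y (Inr (Inr ()))) c = (if c = i then 1 else 0)"
      using vertex unfolding y_def by (simp add: excess_def)
    then show ?thesis
      using x that sum_excess_collapse[OF T, of y c, unfolded collapse]
      unfolding shifted_flows_def by auto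
  qed
  ultimately have "y \<in> shifted_flows n (child_index T) child_edge t" unfolding shifted_flows_def by auto
  then show ?thesis using that T collapse by blast
qed

lemma flow_count_eq_sum_children:
  "flow_count n t H = (\<Sum>T\<in>Collect (staircase rows (length Rs)). flow_count n t (child T))"
proof -
  let ?S = "Collect (staircase rows (length Rs))"
  let ?F = "\<lambda>T. shifted_flows n (child_index T) child_edge t"
  have fin: "finite ?S" by (rule finite_staircases)
  have fin_index: "finite (child_index T)" if "T \<in> ?S" for T
    using staircase_finite that unfolding child_index_def by auto
  have "(\<Sum>T\<in>?S. flow_count n t (child T)) = (\<Sum>T\<in>?S. card (?F T))"
    using flow_count_eq_card[OF fin_index image_mset_child_edge] staircase_finite by (intro sum.cong) auto
  also have "\<dots> = card (SIGMA T:?S. ?F T)"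
    using fin finite_shifted_flows[OF fin_index proper_child_edge] by (subst card_SigmaI) auto
  also have "\<dots> = card (shifted_flows n parent_index parent_edge t)"
  proof (rule bij_betw_same_card, unfold bij_betw_def, intro conjI)
    show "inj_on (\<lambda>(T, y). collapse T y) (SIGMA T:?S. ?F T)" by (rule inj_on_collapse)
    show "(\<lambda>(T, y). collapse T y) ` (SIGMA T:?S. ?F T) = shifted_flows n parent_index parent_edge t"
    proof
      show "(\<lambda>(T, y). collapse T y) ` (SIGMA T:?S. ?F T) \<subseteq> shifted_flows n parent_index parent_edge t"
        using collapse_in_shifted_flows by auto
      show "shifted_flows n parent_index parent_edge t \<subseteq> (\<lambda>(T, y). collapse T y) ` (SIGMA T:?S. ?F T)"
      proof
        fix x assume "x \<in> shifted_flows n parent_index parent_edge t"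
        then obtain T y where "staircase rows (length Rs) T" "y \<in> ?F T" "collapse T y = x"
          by (rule collapse_surj)
        then show "x \<in> (\<lambda>(T, y). collapse T y) ` (SIGMA T:?S. ?F T)" by force
      qed
    qed
  qed
  also have "\<dots> = flow_count n t H" by (simp add: flow_count_eq_card[OF _ image_mset_parent_edge])
  finally show ?thesis ..
qed

end

section \<open>The canonical reduction tree\<close>

lemma count_Gm: "count (Gm n m) e = (if fst e \<in> {1..n} \<and> snd e = n + 1 then m (fst e) else 0)"
proof -
  obtain x y where e: "e = (x, y)" by (cases e)
  have "Gm n m = (\<Sum>i\<in>{1..n}. replicate_mset (m i) (i, n + 1))"
    unfolding Gm_def by (simp add: sum_unfold_sum_mset)
  then have "count (Gm n m) e = (\<Sum>i\<in>{1..n}. count (replicate_mset (m i) (i, n + 1)) e)"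
    by (simp add: count_sum)
  also have "\<dots> = (\<Sum>i\<in>{1..n}. if i = x then (if y = n + 1 then m i else 0) else 0)"
    unfolding e by (intro sum.cong) auto
  also have "\<dots> = (if x \<in> {1..n} then (if y = n + 1 then m x else 0) else 0)"
    by (rule sum.delta) simp
  finally show ?thesis unfolding e by auto
qed

lemma count_leaf_eq_outd:
  assumes L: "\<forall>e\<in>#L. snd e = n + 1 \<and> fst e \<in> {1..n}"
  shows "count L e = (if fst e \<in> {1..n} \<and> snd e = n + 1 then outd L (fst e) else 0)"
proof (cases "fst e \<in> {1..n} \<and> snd e = n + 1")
  case True
  have "filter_mset (\<lambda>x. fst x = fst e) L = filter_mset (\<lambda>x. x = e) L"
    using L True by (intro filter_mset_cong) (auto simp: prod_eq_iff)
  then have "outd L (fst e) = count L e" unfolding outd_def by (simp add: filter_eq_replicate_mset)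
  then show ?thesis using True by simp
next
  case False
  then have "e \<notin># L" using L by auto
  then have "count L e = 0" by (simp add: not_in_iff)
  then show ?thesis by (simp only: if_not_P[OF False])
qed

lemma leaf_eq_Gm_iff:
  assumes L: "\<forall>e\<in>#L. snd e = n + 1 \<and> fst e \<in> {1..n}"
  shows "L = Gm n m \<longleftrightarrow> (\<forall>c\<in>{1..n}. outd L c = m c)"
proof
  assume "L = Gm n m"
  then have "\<And>c. c \<in> {1..n} \<Longrightarrow> count L (c, n + 1) = m c" using count_Gm by simp
  then show "\<forall>c\<in>{1..n}. outd L c = m c" using count_leaf_eq_outd[OF L] by (metis fst_conv snd_conv)
next
  assume "\<forall>c\<in>{1..n}. outd L c = m c"
  then show "L = Gm n m" unfolding multiset_eq_iff using count_leaf_eq_outd[OF L] count_Gm by simp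
qed

lemma shifted_flows_into_top:
  assumes J: "finite J" and E: "\<And>j. j \<in> J \<Longrightarrow> snd (E j) = n + 1 \<and> fst (E j) \<noteq> n + 1"
    and t: "t (n + 1) = 0" and x: "x \<in> shifted_flows n J E t"
  shows "x = (\<lambda>_. 0)"
proof
  fix j
  have "(\<Sum>j\<in>J. excess (E j) (x j) (n + 1)) = 0" using x t unfolding shifted_flows_def by auto
  moreover have "(\<Sum>j\<in>J. excess (E j) (x j) (n + 1)) = - (\<Sum>j\<in>J. int (x j))"
    using E unfolding sum_negf[symmetric] by (intro sum.cong) (auto simp: excess_def)
  ultimately have "\<forall>j\<in>J. int (x j) = 0" using J by (subst sum_nonneg_eq_0_iff[symmetric]) auto
  then show "x j = 0" using x unfolding shifted_flows_def by (cases "j \<in> J") auto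
qed

lemma flow_count_leaf:
  assumes L: "\<forall>e\<in>#L. snd e = n + 1 \<and> fst e \<in> {1..n}"
  shows "flow_count n (demand n m) L = (if L = Gm n m then 1 else 0)"
proof -
  define es where "es = sorted_list_of_multiset L"
  have "snd (es ! j) = n + 1 \<and> fst (es ! j) \<noteq> n + 1" if "j < size L" for j
  proof -
    have "es ! j \<in># L"
      using that unfolding es_def by (metis mset_sorted_list_of_multiset nth_mem set_mset_mset size_mset)
    then show ?thesis using L by fastforce
  qed
  then have zero: "x = (\<lambda>_. 0)" if "x \<in> shifted_flows n {..<size L} (\<lambda>j. es ! j) (demand n m)" for x
    using L by (intro shifted_flows_into_top[OF _ _ _ that]) (auto simp: demand_def)
  have z: "(\<lambda>_. 0) \<in> shifted_flows n {..<size L} (\<lambda>j. es ! j) (demand n m) \<longleftrightarrow> (\<forall>c\<in>{1..n}. outd L c = m c)"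
  proof -
    have s: "\<And>c. (\<Sum>j<size L. excess (es ! j) 0 c) = int (outd L c)"
      using sum_excess_eq_netflow[of L "\<lambda>_. 0"] unfolding es_def netflow_def Let_def by simp
    have o: "outd L (n + 1) = 0" using L by (intro outd_eq_0) auto
    show ?thesis unfolding shifted_flows_def demand_def using o by (auto simp: s le_Suc_eq)
  qed
  have "shifted_flows n {..<size L} (\<lambda>j. es ! j) (demand n m) = (if (\<forall>c\<in>{1..n}. outd L c = m c) then {\<lambda>_. 0} else {})"
    using zero z by auto
  then show ?thesis unfolding flow_count_def es_def[symmetric] using leaf_eq_Gm_iff[OF L] by simp
qed

text \<open>The state after processing the vertices \<open>n, \<dots>, j\<close>: the processed vertices have lost their
  incoming edges, the unprocessed ones still have their original incoming edges and at least one
  outgoing edge, and a processed vertex \<open>x\<close> with \<open>a x = 0\<close> has only the added edge \<open>(x, n + 1)\<close>.\<close>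
definition stage_invariant :: "nat \<Rightarrow> (nat \<Rightarrow> nat) \<Rightarrow> graph \<Rightarrow> nat \<Rightarrow> graph \<Rightarrow> bool" where
  "stage_invariant n a G j H \<longleftrightarrow>
     (\<forall>e\<in>#H. proper_edge n e) \<and>
     (\<forall>e\<in>#H. snd e < j \<or> snd e = n + 1) \<and>
     (\<forall>x<j. filter_mset (\<lambda>e. snd e = x) H = filter_mset (\<lambda>e. snd e = x) G) \<and>
     (\<forall>x. 1 \<le> x \<and> x < j \<and> x \<le> n \<longrightarrow> (\<exists>e\<in>#H. fst e = x)) \<and>
     (\<forall>x. j \<le> x \<and> x \<le> n \<and> a x = 0 \<and> (\<exists>e\<in>#G. snd e = x)
        \<longrightarrow> filter_mset (\<lambda>e. fst e = x) H = {#(x, n + 1)#})"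

lemma stage_invariant_init: "standing n G \<Longrightarrow> n < j \<Longrightarrow> stage_invariant n a G j G"
  unfolding stage_invariant_def standing_def proper_edge_def by fastforce

lemma stage_invariant_skip:
  assumes I: "stage_invariant n a G (Suc i) H" and no_in: "\<not> (\<exists>e\<in>#H. snd e = i)"
  shows "stage_invariant n a G i H"
proof -
  have same: "filter_mset (\<lambda>e. snd e = i) H = filter_mset (\<lambda>e. snd e = i) G"
    using I unfolding stage_invariant_def by blast
  have no_in_G: "\<not> (\<exists>e\<in>#G. snd e = i)"
  proof
    assume "\<exists>e\<in>#G. snd e = i"
    then obtain e where "e \<in># filter_mset (\<lambda>e. snd e = i) G" by auto
    then have "e \<in># filter_mset (\<lambda>e. snd e = i) H" using same by simp
    then show False using no_in by auto
  qed
  show ?thesis unfolding stage_invariant_def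
  proof (intro conjI allI impI ballI)
    fix e assume e: "e \<in># H"
    show "proper_edge n e" using I e unfolding stage_invariant_def by blast
    have "snd e < Suc i \<or> snd e = n + 1" using I e unfolding stage_invariant_def by blast
    then show "snd e < i \<or> snd e = n + 1" using no_in e by auto
  next
    fix x :: nat
    assume "x < i"
    then show "filter_mset (\<lambda>e. snd e = x) H = filter_mset (\<lambda>e. snd e = x) G"
      using I unfolding stage_invariant_def by simp
  next
    fix x assume "1 \<le> x \<and> x < i \<and> x \<le> n"
    then show "\<exists>e\<in>#H. fst e = x" using I unfolding stage_invariant_def by simp
  next
    fix x assume x: "i \<le> x \<and> x \<le> n \<and> a x = 0 \<and> (\<exists>e\<in>#G. snd e = x)"
    then have "Suc i \<le> x" using no_in_G by (metis Suc_leI le_neq_implies_less)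
    then show "filter_mset (\<lambda>e. fst e = x) H = {#(x, n + 1)#}"
      using I x unfolding stage_invariant_def by blast
  qed
qed

context vertex_split
begin

lemma mem_child:
  assumes "e \<in># child T" "finite T"
  shows "(e \<in># H \<and> fst e \<noteq> i \<and> snd e \<noteq> i) \<or> (\<exists>s\<in>T. e = tree_edge s) \<or> (\<not> pos \<and> e = (i, n + 1))"
  using assms unfolding child_def rest_def by (auto split: if_splits)

lemma tree_edge_bounds:
  assumes top: "\<forall>e\<in>#H. snd e < Suc i \<or> snd e = n + 1"
    and T: "staircase rows (length Rs) T" and s: "s \<in> T"
  shows "snd (tree_edge s) = n + 1" "1 \<le> fst (tree_edge s)" "fst (tree_edge s) \<le> i"
    "fst (tree_edge s) = i \<Longrightarrow> pos"
proof -
  obtain p q where pq: "s = (p, q)" "p < rows" "q < length Rs"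
    using T s unfolding staircase_def by fastforce
  have "Rs ! q \<in># mset Rs" using pq(3) by simp
  then have "Rs ! q \<in># H" unfolding mset_Rs by simp
  then show "snd (tree_edge s) = n + 1"
    using top nth_Rs[OF pq(3)] unfolding tree_edge_def pq proper_edge_def by fastforce
  show "1 \<le> fst (tree_edge s)" "fst (tree_edge s) \<le> i" "fst (tree_edge s) = i \<Longrightarrow> pos"
    using nth_Ls[of p] vertex pq unfolding tree_edge_def src_def proper_edge_def
    by (auto split: if_splits)
qed

lemma tree_edge_mem_child: "finite T \<Longrightarrow> s \<in> T \<Longrightarrow> tree_edge s \<in># child T"
  unfolding child_def by simp

context
  fixes T assumes top: "\<forall>e\<in>#H. snd e < Suc i \<or> snd e = n + 1" and T: "staircase rows (length Rs) T"
begin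

lemma child_edge_bounds:
  assumes "e \<in># child T"
  shows "proper_edge n e \<and> (snd e < i \<or> snd e = n + 1)"
  using mem_child[OF assms staircase_finite[OF T]]
proof (elim disjE conjE bexE)
  assume "e \<in># H" "snd e \<noteq> i"
  then show ?thesis using proper top by fastforce
next
  fix s assume s: "s \<in> T" "e = tree_edge s"
  then show ?thesis using tree_edge_bounds[OF top T s(1)] vertex unfolding proper_edge_def by auto
qed (use vertex in \<open>auto simp: proper_edge_def\<close>)

lemma filter_in_edges_child:
  assumes x: "x < i"
  shows "filter_mset (\<lambda>e. snd e = x) (child T) = filter_mset (\<lambda>e. snd e = x) H"
proof (rule multiset_eqI)
  fix e
  note tree = tree_edge_bounds[OF top T]
  show "count (filter_mset (\<lambda>e. snd e = x) (child T)) e = count (filter_mset (\<lambda>e. snd e = x) H) e"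
  proof (cases "snd e = x \<and> e \<in># H")
    case True
    then have "fst e < i" using proper x unfolding proper_edge_def by fastforce
    then show ?thesis using True x vertex tree(1) staircase_finite[OF T]
      unfolding child_def rest_def by (auto simp: count_eq_zero_iff)
  next
    case False
    have "e \<notin># child T" if "snd e = x"
    proof
      assume "e \<in># child T"
      from mem_child[OF this staircase_finite[OF T]] show False
      proof (elim disjE bexE conjE)
        fix s assume "s \<in> T" "e = tree_edge s"
        then show False using that x vertex tree(1) by simp
      qed (use False that x vertex in auto)
    qed
    then show ?thesis using False by (cases "snd e = x") (simp_all add: not_in_iff)
  qed
qed

lemma out_edge_child:
  assumes e: "e \<in># H" "fst e \<noteq> i"
  shows "\<exists>e'\<in>#child T. fst e' = fst e"
proof (cases "snd e = i")
  case False
  then have "e \<in># child T" using e unfolding child_def rest_def by simp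
  then show ?thesis by blast
next
  case True
  then have "e \<in># mset Ls" using e unfolding mset_Ls by simp
  then obtain p where p: "p < length Ls" "Ls ! p = e" by (auto simp: in_set_conv_nth)
  have "\<exists>q. (p, q) \<in> T"
    by (rule staircase_row_nonempty[OF T]) (use p Rs_ne in \<open>auto simp: Suc_le_eq\<close>)
  then obtain q where "(p, q) \<in> T" ..
  then have "tree_edge (p, q) \<in># child T" by (rule tree_edge_mem_child[OF staircase_finite[OF T]])
  moreover have "fst (tree_edge (p, q)) = fst e" using p unfolding tree_edge_def src_def by simp
  ultimately show ?thesis by blast
qed

lemma filter_out_edges_child:
  fixes a :: "nat \<Rightarrow> nat"
  assumes pos: "pos = (0 < a i)" and x: "i \<le> x" "a x = 0"
  shows "filter_mset (\<lambda>e. fst e = x) (child T)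
    = (if x = i then {#(i, n + 1)#} else filter_mset (\<lambda>e. fst e = x) H)"
proof -
  note tree = tree_edge_bounds[OF top T]
  have "fst (tree_edge s) \<noteq> x" if "s \<in> T" for s
  proof
    assume eq: "fst (tree_edge s) = x"
    then have "x = i" using tree(3)[OF that] x(1) by simp
    then show False using tree(4)[OF that] eq x(2) pos by simp
  qed
  then have trees: "filter_mset (\<lambda>e. fst e = x) (image_mset tree_edge (mset_set T)) = {#}"
    using staircase_finite[OF T] by (auto simp del: prod.collapse) (metis fst_conv)
  show ?thesis
  proof (cases "x = i")
    case True
    then show ?thesis using x pos trees unfolding child_def rest_def by simp
  next
    case False
    have "filter_mset (\<lambda>e. fst e = x) (mset rest) = filter_mset (\<lambda>e. fst e = x) H"
      unfolding rest_def mset_sorted_list_of_multiset filter_filter_mset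
    proof (rule filter_mset_cong)
      fix e assume "e \<in># H"
      then show "((snd e \<noteq> i \<and> fst e \<noteq> i) \<and> fst e = x) = (fst e = x)"
        using proper x False unfolding proper_edge_def by force
    qed simp
    then show ?thesis using False trees unfolding child_def by simp
  qed
qed

end

lemma stage_invariant_child:
  assumes I: "stage_invariant n a G (Suc i) H" and pos: "pos = (0 < a i)"
    and T: "staircase rows (length Rs) T"
  shows "stage_invariant n a G i (child T)"
proof -
  have top: "\<forall>e\<in>#H. snd e < Suc i \<or> snd e = n + 1" using I unfolding stage_invariant_def by blast
  show ?thesis unfolding stage_invariant_def
  proof (intro conjI allI impI ballI)
    fix e assume "e \<in># child T"
    then show "proper_edge n e" "snd e < i \<or> snd e = n + 1" using child_edge_bounds[OF top T] by auto
  next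
    fix x assume "x < i"
    then show "filter_mset (\<lambda>e. snd e = x) (child T) = filter_mset (\<lambda>e. snd e = x) G"
      using I filter_in_edges_child[OF top T] unfolding stage_invariant_def by simp
  next
    fix x assume x: "1 \<le> x \<and> x < i \<and> x \<le> n"
    then obtain e where "e \<in># H" "fst e = x" using I unfolding stage_invariant_def by auto
    then show "\<exists>e\<in>#child T. fst e = x" using out_edge_child[OF top T] x by fastforce
  next
    fix x assume x: "i \<le> x \<and> x \<le> n \<and> a x = 0 \<and> (\<exists>e\<in>#G. snd e = x)"
    then show "filter_mset (\<lambda>e. fst e = x) (child T) = {#(x, n + 1)#}"
      using I filter_out_edges_child[OF top T, where a = a, OF pos] unfolding stage_invariant_def by auto
  qed
qed
end

definition stage_leaves ::
  "nat \<Rightarrow> (nat \<Rightarrow> nat) \<Rightarrow> (graph \<Rightarrow> nat \<Rightarrow> edge list) \<Rightarrow> (graph \<Rightarrow> nat \<Rightarrow> edge list) \<Rightarrow> graph \<Rightarrow> nat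
     \<Rightarrow> graph multiset" where
  "stage_leaves n a ordI ordO G j = foldr (reduce_step n a ordI ordO) [j..<Suc n] {#G#}"

lemma canon_leaves_eq_stage_leaves: "canon_leaves n a ordI ordO G = stage_leaves n a ordI ordO G 2"
  unfolding canon_leaves_def stage_leaves_def foldl_conv_foldr by simp

lemma stage_leaves_above: "n < j \<Longrightarrow> stage_leaves n a ordI ordO G j = {#G#}"
  unfolding stage_leaves_def by simp

lemma stage_leaves_step:
  "j \<le> n \<Longrightarrow> stage_leaves n a ordI ordO G j = reduce_step n a ordI ordO j (stage_leaves n a ordI ordO G (Suc j))"
proof -
  assume "j \<le> n"
  then have "[j..<Suc n] = j # [Suc j..<Suc n]" by (simp add: upt_conv_Cons)
  then show ?thesis unfolding stage_leaves_def by simp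
qed

lemma stage_vertex_split:
  assumes I: "stage_invariant n a G (Suc j) H" and j: "2 \<le> j" "j \<le> n" and in_j: "\<exists>e\<in>#H. snd e = j"
    and ordI: "\<And>H i. mset (ordI H i) = filter_mset (\<lambda>e. snd e = i) H"
    and ordO: "\<And>H i. mset (ordO H i) = filter_mset (\<lambda>e. fst e = i) H"
  shows "vertex_split n H j (ordI H j) (ordO H j)"
proof
  show "\<forall>e\<in>#H. proper_edge n e" using I unfolding stage_invariant_def by blast
  show "1 \<le> j" "j \<le> n" using j by simp_all
  show "ordI H j \<noteq> []"
  proof
    assume "ordI H j = []"
    then have empty: "filter_mset (\<lambda>e. snd e = j) H = {#}" using ordI[of H j] by simp
    obtain e where "e \<in># H" "snd e = j" using in_j by blast
    then have "e \<in># filter_mset (\<lambda>e. snd e = j) H" by simp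
    then show False unfolding empty by simp
  qed
  have out_j: "\<exists>e\<in>#H. fst e = j" using I j unfolding stage_invariant_def by simp
  show "ordO H j \<noteq> []"
  proof
    assume "ordO H j = []"
    then have empty: "filter_mset (\<lambda>e. fst e = j) H = {#}" using ordO[of H j] by simp
    obtain e where "e \<in># H" "fst e = j" using out_j by blast
    then have "e \<in># filter_mset (\<lambda>e. fst e = j) H" by simp
    then show False unfolding empty by simp
  qed
qed (use ordI ordO in simp_all)

lemma stage_invariant_leaves:
  assumes G: "standing n G"
    and ordI: "\<And>H i. mset (ordI H i) = filter_mset (\<lambda>e. snd e = i) H"
    and ordO: "\<And>H i. mset (ordO H i) = filter_mset (\<lambda>e. fst e = i) H"
  shows "2 \<le> j \<Longrightarrow> \<forall>H\<in>#stage_leaves n a ordI ordO G j. stage_invariant n a G j H"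
proof (induction "n + 1 - j" arbitrary: j)
  case 0
  then show ?case using stage_leaves_above stage_invariant_init[OF G] by simp
next
  case (Suc d)
  then have j: "2 \<le> j" "j \<le> n" by auto
  have IH: "\<forall>H\<in>#stage_leaves n a ordI ordO G (Suc j). stage_invariant n a G (Suc j) H"
    using Suc by simp
  show ?case
  proof
    fix H' assume "H' \<in># stage_leaves n a ordI ordO G j"
    moreover define F where
      "F H = (if \<exists>e\<in>#H. snd e = j then reduce_children n a ordI ordO j H else {#H#})" for H
    ultimately have "H' \<in># \<Sum>\<^sub># (image_mset F (stage_leaves n a ordI ordO G (Suc j)))"
      unfolding stage_leaves_step[OF j(2)] reduce_step_def by simp
    then obtain H where H: "H \<in># stage_leaves n a ordI ordO G (Suc j)" and H': "H' \<in># F H"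
      by auto
    have I: "stage_invariant n a G (Suc j) H" using IH H by blast
    show "stage_invariant n a G j H'"
    proof (cases "\<exists>e\<in>#H. snd e = j")
      case True
      interpret vertex_split n H j "ordI H j" "ordO H j" "0 < a j"
        by (rule stage_vertex_split[OF I j True ordI ordO])
      have "H' \<in># image_mset child (mset_set (Collect (staircase rows (length (ordO H j)))))"
        using H' True unfolding F_def reduce_children_eq[where a = a and ordI = ordI and ordO = ordO, OF refl refl refl] by simp
      then obtain T where "staircase rows (length (ordO H j)) T" "H' = child T"
        using finite_staircases by auto
      then show ?thesis using stage_invariant_child[OF I refl] by simp
    next
      case False
      then show ?thesis using H' stage_invariant_skip[OF I] unfolding F_def by simp
    qed
  qed
qed

lemma sum_mset_image_mset_Union_mset:
  "sum_mset (image_mset g (\<Sum>\<^sub># M)) = sum_mset (image_mset (\<lambda>N. sum_mset (image_mset g N)) M)"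
  by (induction M) auto

text \<open>The hypothesis \<open>m_one\<close> is where the leaf \<open>G(m)\<close> enters: at a vertex \<open>j\<close> with \<open>a j = 0\<close>
  the reduction adds the edge \<open>(j, n + 1)\<close>, which carries no flow exactly when \<open>m j = 1\<close>.\<close>
lemma sum_flow_count_reduce_children:
  assumes I: "stage_invariant n a G (Suc j) H" and j: "2 \<le> j" "j \<le> n" and in_j: "\<exists>e\<in>#H. snd e = j"
    and ordI: "\<And>H i. mset (ordI H i) = filter_mset (\<lambda>e. snd e = i) H"
    and ordO: "\<And>H i. mset (ordO H i) = filter_mset (\<lambda>e. fst e = i) H"
    and m_pos: "\<And>i. i \<in> {1..n} \<Longrightarrow> 0 < m i"
    and m_one: "\<And>x. 2 \<le> x \<Longrightarrow> x \<le> n \<Longrightarrow> a x = 0 \<Longrightarrow> \<exists>e\<in>#G. snd e = x \<Longrightarrow> m x = 1"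
  shows "sum_mset (image_mset (flow_count n (demand n m)) (reduce_children n a ordI ordO j H))
    = flow_count n (demand n m) H"
proof -
  interpret vertex_split n H j "ordI H j" "ordO H j" "0 < a j"
    by (rule stage_vertex_split[OF I j in_j ordI ordO])
  have same: "filter_mset (\<lambda>e. snd e = j) H = filter_mset (\<lambda>e. snd e = j) G"
    using I unfolding stage_invariant_def by simp
  obtain e where "e \<in># H" "snd e = j" using in_j by blast
  then have "e \<in># filter_mset (\<lambda>e. snd e = j) G" unfolding same[symmetric] by simp
  then have "\<exists>e\<in>#G. snd e = j" by auto
  then interpret vertex_reduction n H j "ordI H j" "ordO H j" "0 < a j" "demand n m"
    using m_pos m_one j by unfold_locales (auto simp: demand_def Suc_le_eq)
  show ?thesis
    using finite_staircases
    unfolding reduce_children_eq[where a = a and ordI = ordI and ordO = ordO, OF refl refl refl]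
    by (simp add: flow_count_eq_sum_children sum_unfold_sum_mset multiset.map_comp comp_def)
qed

lemma sum_flow_count_stage_leaves:
  assumes G: "standing n G"
    and ordI: "\<And>H i. mset (ordI H i) = filter_mset (\<lambda>e. snd e = i) H"
    and ordO: "\<And>H i. mset (ordO H i) = filter_mset (\<lambda>e. fst e = i) H"
    and m_pos: "\<And>i. i \<in> {1..n} \<Longrightarrow> 0 < m i"
    and m_one: "\<And>x. 2 \<le> x \<Longrightarrow> x \<le> n \<Longrightarrow> a x = 0 \<Longrightarrow> \<exists>e\<in>#G. snd e = x \<Longrightarrow> m x = 1"
  shows "2 \<le> j \<Longrightarrow> sum_mset (image_mset (flow_count n (demand n m)) (stage_leaves n a ordI ordO G j))
    = flow_count n (demand n m) G"
proof (induction "n + 1 - j" arbitrary: j)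
  case 0
  then show ?case using stage_leaves_above by simp
next
  case (Suc d)
  then have j: "2 \<le> j" "j \<le> n" by auto
  define F where "F H = (if \<exists>e\<in>#H. snd e = j then reduce_children n a ordI ordO j H else {#H#})" for H
  have per: "sum_mset (image_mset (flow_count n (demand n m)) (F H)) = flow_count n (demand n m) H"
    if "H \<in># stage_leaves n a ordI ordO G (Suc j)" for H
  proof (cases "\<exists>e\<in>#H. snd e = j")
    case True
    have "stage_invariant n a G (Suc j) H"
      using stage_invariant_leaves[OF G ordI ordO, of "Suc j"] that j by simp
    from sum_flow_count_reduce_children[OF this j True ordI ordO m_pos m_one]
    show ?thesis using True unfolding F_def by simp
  qed (simp add: F_def)
  have "stage_leaves n a ordI ordO G j = \<Sum>\<^sub># (image_mset F (stage_leaves n a ordI ordO G (Suc j)))"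
    unfolding stage_leaves_step[OF j(2)] reduce_step_def F_def ..
  then have "sum_mset (image_mset (flow_count n (demand n m)) (stage_leaves n a ordI ordO G j))
      = sum_mset (image_mset (\<lambda>H. sum_mset (image_mset (flow_count n (demand n m)) (F H)))
          (stage_leaves n a ordI ordO G (Suc j)))"
    by (simp add: sum_mset_image_mset_Union_mset multiset.map_comp comp_def)
  also have "\<dots> = sum_mset (image_mset (flow_count n (demand n m)) (stage_leaves n a ordI ordO G (Suc j)))"
    using per by (intro arg_cong[where f = sum_mset] image_mset_cong) simp
  also have "\<dots> = flow_count n (demand n m) G" using Suc j by simp
  finally show ?case .
qed

lemma standing_proper: "standing n G \<Longrightarrow> \<forall>e\<in>#G. proper_edge n e"
  unfolding standing_def proper_edge_def by auto

lemma stage_invariant_leaf: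
  "stage_invariant n a G 2 L \<Longrightarrow> \<forall>e\<in>#L. snd e = n + 1 \<and> fst e \<in> {1..n}"
  unfolding stage_invariant_def proper_edge_def by fastforce

lemma stage_invariant_Gm:
  assumes "stage_invariant n a G 2 (Gm n m)" "2 \<le> x" "x \<le> n" "a x = 0" "\<exists>e\<in>#G. snd e = x"
  shows "m x = 1"
proof -
  have "filter_mset (\<lambda>e. fst e = x) (Gm n m) = {#(x, n + 1)#}"
    using assms unfolding stage_invariant_def by blast
  then have "count (filter_mset (\<lambda>e. fst e = x) (Gm n m)) (x, n + 1) = 1" by simp
  then have "count (Gm n m) (x, n + 1) = 1" by simp
  then show ?thesis using count_Gm[of n m "(x, n + 1)"] assms by simp
qed

theorem lemma4p1:
  fixes n :: nat and G :: graph and a m :: "nat \<Rightarrow> nat"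
    and ordI ordO :: "graph \<Rightarrow> nat \<Rightarrow> edge list"
  assumes "standing n G"
    and "\<And>H i. mset (ordI H i) = filter_mset (\<lambda>e. snd e = i) H"
    and "\<And>H i. mset (ordO H i) = filter_mset (\<lambda>e. fst e = i) H"
    and "\<And>i. i \<in> {1..n} \<Longrightarrow> m i > 0"
    and "count (canon_leaves n a ordI ordO G) (Gm n m) > 0"
  shows "count (canon_leaves n a ordI ordO G) (Gm n m)
         = K n G (\<lambda>k. if k \<in> {1..n} then int (m k) - int (outd G k) else 0)"
proof -
  note G = assms(1) and ordI = assms(2) and ordO = assms(3)
  let ?L = "stage_leaves n a ordI ordO G 2"
  have leaves: "canon_leaves n a ordI ordO G = ?L" by (rule canon_leaves_eq_stage_leaves)
  have inv: "stage_invariant n a G 2 H" if "H \<in># ?L" for H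
    using stage_invariant_leaves[OF G ordI ordO] that by simp
  have "Gm n m \<in># ?L" using assms(5) leaves by simp
  then have m_one: "m x = 1" if "2 \<le> x" "x \<le> n" "a x = 0" "\<exists>e\<in>#G. snd e = x" for x
    using stage_invariant_Gm[OF inv] that by blast
  have "count ?L (Gm n m) = sum_mset (image_mset (\<lambda>H. if H = Gm n m then 1 else 0) ?L)"
    by (simp add: sum_mset_delta)
  also have "\<dots> = sum_mset (image_mset (flow_count n (demand n m)) ?L)"
    using flow_count_leaf[OF stage_invariant_leaf[OF inv]] by (intro arg_cong[where f = sum_mset] image_mset_cong) simp
  also have "\<dots> = flow_count n (demand n m) G"
    using sum_flow_count_stage_leaves[OF G ordI ordO assms(4) m_one] by simp
  also have "\<dots> = K n G (\<lambda>k. if k \<in> {1..n} then int (m k) - int (outd G k) else 0)"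
    using K_eq_flow_count[OF standing_proper[OF G]] by simp
  finally show ?thesis unfolding leaves .
qed
end
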